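(* Assume the following setting. $S$ is a finite semigroup with anti-involution $*$, $R$ a commutative ring with $1$, $\alpha$ a twisting from $S$ into $R$ with $\alpha(x,y)=\alpha(y^*,x^* )$; for each $\mathcal D$-class $D$ there is an idempotent $1_D\in D$ with $1_D^*=1_D$; $L_D$ is the $\mathcal L$-class of $1_D$, $L_D^*=\{x^*\mid x\in L_D\}$, $G_D=L_D\cap L_D^*$; for each $D$ there is $\beta_D:L_D\times L_D^*\to G(R)$ with $\beta_D(x,y)\beta_D(xy,z)=\beta_D(x,yz)\beta_D(y,z)$, $\alpha(x,y)\beta_D(xy,z)=\alpha(x,yz)\beta_D(y,z)$ and $\beta_D(x,y)=\beta_D(y^*,x^* )$ whenever all occurring values of $\beta_D$ have arguments in $L_D\times L_D^*$; and $R^{\beta_D}[G_D]$ is cellular with cell datum $(\Lambda_D,M_D,C,* )$. Let $R^\alpha[S]$ have the cell datum $(\Lambda,M,C,* )$ where $\Lambda=\{(D,\lambda)\}$ with $(D_1,\lambda_1)\le(D_2,\lambda_2)$ iff $D_1<_{\mathcal D}D_2$ or ($D_1=D_2$, $\lambda_1\le\lambda_2$), $M(D,\lambda)=\mathcal L_D\times M_D(\lambda)$ ($\mathcal L_D$ the set of $\mathcal L$-classes in $D$), $u_L\in L$ with $u_L\,\mathcal R\,1_D$ chosen for each $L\in\mathcal L_D$, and $C^{(D,\lambda)}_{(L,s)(K,t)}=\sum_{g\in G_D}c^\lambda_{st}(g)\beta_D(u_L^*,g)\beta_D(u_L^*g,u_K)(u_L^*gu_K)$ where $C^\lambda_{st}=\sum_g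 c^\lambda_{st}(g)g$. Define the twisted sandwich matrix $P_D^\alpha\in\mathrm{Mat}_{\mathcal L_D}(R^{\beta_D}[G_D])$ by $(P_D^\alpha)_{LK}=0$ if $u_Lu_K^*<_{\mathcal D}D$ and $(P_D^\alpha)_{LK}=\alpha(u_L,u_K^* )\,u_Lu_K^*$ if $u_Lu_K^*\in G_D$ (one of these always holds). Then for all $(D,\lambda)\in\Lambda$ and $(L,s),(K,t)\in M(D,\lambda)$, \[\phi^{(D,\lambda)}\big(C_{(L,s)},C_{(K,t)}\big)=\phi^\lambda_{(P_D^\alpha)_{LK}}(C_s,C_t),\] where the left side is the form for the cellular algebra $R^\alpha[S]$ and the right side is the form for the cellular algebra $R^{\beta_D}[G_D]$.
   Context: Green's relations ($S^1$ = $S$ with identity adjoined): $x\le_{\mathcal R}y$ iff $x\in yS^1$, $x\le_{\mathcal L}y$ iff $x\in S^1y$, $x\le_{\mathcal J}y$ iff $x\in S^1yS^1$; $\mathcal R,\mathcal L,\mathcal J$ associated equivalences; $\mathcal H=\mathcal R\cap\mathcal L$; $\mathcal D$ generated by $\mathcal R\cup\mathcal L$; for finite $S$, $\mathcal D=\mathcal J$ and $<_{\mathcal D}$ is the strict order on $\mathcal D$-classes induced by $\le_{\mathcal J}$ ($x<_{\mathcal D}D$ means the class of $x$ is strictly below $D$). Anti-involution of $S$: $(x^* )^*=x$, $(xy)^*=y^*x^*$; it and $*|_{G_D}$ extend linearly to anti-involutions of the algebras. A twisting satisfies $\alpha(x,y)\alpha(xy,z)=\alpha(x,yz)\alpha(y,z)$;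 $R^\alpha[S]$ has basis $S$ and product $x\cdot y=\alpha(x,y)(xy)$; $R^{\beta_D}[G_D]$ likewise with $\beta_D$. Cellular algebra $A$ with cell datum $(\Lambda,M,C,* )$: $\Lambda$ a finite poset, $\{C^\lambda_{st}: s,t\in M(\lambda)\}$ an $R$-basis, $(C^\lambda_{st})^*=C^\lambda_{ts}$, and for $a\in A$ there are $r_a(s',s)\in R$ with $aC^\lambda_{st}\in\sum_{s'}r_a(s',s)C^\lambda_{s't}+A(<\lambda)$ for all $t$, where $A(<\lambda)=\mathrm{span}\{C^\mu_{uv}:\mu<\lambda\}$. Cell module $W(\lambda)$: free $R$-module on $\{C_s: s\in M(\lambda)\}$. For $a\in A$, the bilinear form $\phi^\lambda_a$ on $W(\lambda)$ is defined on basis elements by: $\phi^\lambda_a(C_s,C_t)$ is the unique element of $R$ with $C^\lambda_{s's}\,a\,C^\lambda_{tt'}\in\phi^\lambda_a(C_s,C_t)C^\lambda_{s't'}+A(<\lambda)$ for all $s',t'\in M(\lambda)$; and $\phi^\lambda=\phi^\lambda_1$ (here $\phi^\lambda(C_s,C_t)$ is likewise the unique scalar with $C^\lambda_{s's}C^\lambda_{tt'}\in\phi^\lambda(C_s,C_t)C^\lambda_{s't'}+A(<\lambda)$). *)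

theory Defs
  imports Main "HOL-Library.Function_Algebras"
begin

definition smul :: "'r::comm_ring_1 \<Rightarrow> ('b \<Rightarrow> 'r) \<Rightarrow> ('b \<Rightarrow> 'r)" where
  "smul c f = (\<lambda>x. c * f x)"

definition alg_carrier :: "'b set \<Rightarrow> ('b \<Rightarrow> 'r::zero) set" where
  "alg_carrier B = {f. \<forall>x. x \<notin> B \<longrightarrow> f x = 0}"

definition basis_elt :: "'b \<Rightarrow> 'b \<Rightarrow> 'r::{zero,one}" where
  "basis_elt x = (\<lambda>z. if z = x then 1 else 0)"

text \<open>Product of R^alpha[B]: x . y = alpha(x,y) (xy), extended bilinearly.\<close>
definition tw_mult :: "'b set \<Rightarrow> ('b \<Rightarrow> 'b \<Rightarrow> 'b) \<Rightarrow> ('b \<Rightarrow> 'b \<Rightarrow> 'r::comm_ring_1)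
    \<Rightarrow> ('b \<Rightarrow> 'r) \<Rightarrow> ('b \<Rightarrow> 'r) \<Rightarrow> ('b \<Rightarrow> 'r)" where
  "tw_mult B m al f g = (\<lambda>z. \<Sum>x\<in>B. \<Sum>y\<in>B. if m x y = z then al x y * f x * g y else 0)"

text \<open>Linear extension of an involution st: (sum f(x) x)^* = sum f(x) x^*.\<close>
definition alg_star :: "('b \<Rightarrow> 'b) \<Rightarrow> ('b \<Rightarrow> 'r) \<Rightarrow> ('b \<Rightarrow> 'r)" where
  "alg_star st f = (\<lambda>z. f (st z))"

definition cell_span :: "'i set \<Rightarrow> ('i \<Rightarrow> ('b \<Rightarrow> 'r::comm_ring_1)) \<Rightarrow> ('b \<Rightarrow> 'r) set" where
  "cell_span I v = {f. \<exists>c. f = (\<Sum>i\<in>I. smul (c i) (v i))}"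

definition cell_idx :: "'l set \<Rightarrow> ('l \<Rightarrow> 'm set) \<Rightarrow> ('l \<times> 'm \<times> 'm) set" where
  "cell_idx Lam M = {(lam, s, t). lam \<in> Lam \<and> s \<in> M lam \<and> t \<in> M lam}"

definition lower_ideal :: "'l set \<Rightarrow> ('l \<Rightarrow> 'l \<Rightarrow> bool) \<Rightarrow> ('l \<Rightarrow> 'm set)
    \<Rightarrow> ('l \<Rightarrow> 'm \<Rightarrow> 'm \<Rightarrow> ('b \<Rightarrow> 'r::comm_ring_1)) \<Rightarrow> 'l \<Rightarrow> ('b \<Rightarrow> 'r) set" where
  "lower_ideal Lam le M C lam =
     cell_span {(mu, u, w). mu \<in> Lam \<and> le mu lam \<and> mu \<noteq> lam \<and> u \<in> M mu \<and> w \<in> M mu}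
               (\<lambda>(mu, u, w). C mu u w)"

definition cellular :: "'b set \<Rightarrow> (('b \<Rightarrow> 'r) \<Rightarrow> ('b \<Rightarrow> 'r) \<Rightarrow> ('b \<Rightarrow> 'r))
    \<Rightarrow> (('b \<Rightarrow> 'r) \<Rightarrow> ('b \<Rightarrow> 'r)) \<Rightarrow> 'l set \<Rightarrow> ('l \<Rightarrow> 'l \<Rightarrow> bool) \<Rightarrow> ('l \<Rightarrow> 'm set)
    \<Rightarrow> ('l \<Rightarrow> 'm \<Rightarrow> 'm \<Rightarrow> ('b \<Rightarrow> 'r::comm_ring_1)) \<Rightarrow> bool" where
  "cellular B mul st Lam le M C \<longleftrightarrow>
     finite Lam \<and>
     (\<forall>x\<in>Lam. le x x) \<and>
     (\<forall>x\<in>Lam. \<forall>y\<in>Lam. le x y \<and> le y x \<longrightarrow> x = y) \<and>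
     (\<forall>x\<in>Lam. \<forall>y\<in>Lam. \<forall>z\<in>Lam. le x y \<and> le y z \<longrightarrow> le x z) \<and>
     (\<forall>lam\<in>Lam. finite (M lam)) \<and>
     \<comment> \<open>the C^lam_st form an R-basis of A\<close>
     (\<forall>(lam, s, t)\<in>cell_idx Lam M. C lam s t \<in> alg_carrier B) \<and>
     alg_carrier B \<subseteq> cell_span (cell_idx Lam M) (\<lambda>(lam, s, t). C lam s t) \<and>
     (\<forall>c. (\<Sum>(lam, s, t)\<in>cell_idx Lam M. smul (c (lam, s, t)) (C lam s t)) = 0
          \<longrightarrow> (\<forall>i\<in>cell_idx Lam M. c i = 0)) \<and>
     \<comment> \<open>st is an R-linear anti-involution of A\<close>
     (\<forall>f\<in>alg_carrier B. st f \<in> alg_carrier B \<and> st (st f) = f) \<and>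
     (\<forall>c. \<forall>f\<in>alg_carrier B. \<forall>g\<in>alg_carrier B. st (smul c f + g) = smul c (st f) + st g) \<and>
     (\<forall>f\<in>alg_carrier B. \<forall>g\<in>alg_carrier B. st (mul f g) = mul (st g) (st f)) \<and>
     (\<forall>lam\<in>Lam. \<forall>s\<in>M lam. \<forall>t\<in>M lam. st (C lam s t) = C lam t s) \<and>
     \<comment> \<open>multiplication rule\<close>
     (\<forall>a\<in>alg_carrier B. \<forall>lam\<in>Lam. \<forall>s\<in>M lam. \<exists>r. \<forall>t\<in>M lam.
        \<exists>g\<in>lower_ideal Lam le M C lam.
          mul a (C lam s t) = (\<Sum>s'\<in>M lam. smul (r s') (C lam s' t)) + g)"

definition cell_form :: "(('b \<Rightarrow> 'r) \<Rightarrow> ('b \<Rightarrow> 'r) \<Rightarrow> ('b \<Rightarrow> 'r)) \<Rightarrow> 'l set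
    \<Rightarrow> ('l \<Rightarrow> 'l \<Rightarrow> bool) \<Rightarrow> ('l \<Rightarrow> 'm set) \<Rightarrow> ('l \<Rightarrow> 'm \<Rightarrow> 'm \<Rightarrow> ('b \<Rightarrow> 'r::comm_ring_1))
    \<Rightarrow> 'l \<Rightarrow> 'm \<Rightarrow> 'm \<Rightarrow> 'r" where
  "cell_form mul Lam le M C lam s t =
     (THE r. \<forall>s'\<in>M lam. \<forall>t'\<in>M lam. \<exists>g\<in>lower_ideal Lam le M C lam.
        mul (C lam s' s) (C lam t t') = smul r (C lam s' t') + g)"

definition cell_form_a :: "(('b \<Rightarrow> 'r) \<Rightarrow> ('b \<Rightarrow> 'r) \<Rightarrow> ('b \<Rightarrow> 'r)) \<Rightarrow> 'l set
    \<Rightarrow> ('l \<Rightarrow> 'l \<Rightarrow> bool) \<Rightarrow> ('l \<Rightarrow> 'm set) \<Rightarrow> ('l \<Rightarrow> 'm \<Rightarrow> 'm \<Rightarrow> ('b \<Rightarrow> 'r::comm_ring_1))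
    \<Rightarrow> 'l \<Rightarrow> ('b \<Rightarrow> 'r) \<Rightarrow> 'm \<Rightarrow> 'm \<Rightarrow> 'r" where
  "cell_form_a mul Lam le M C lam a s t =
     (THE r. \<forall>s'\<in>M lam. \<forall>t'\<in>M lam. \<exists>g\<in>lower_ideal Lam le M C lam.
        mul (mul (C lam s' s) a) (C lam t t') = smul r (C lam s' t') + g)"

definition semigroup_on :: "'s set \<Rightarrow> ('s \<Rightarrow> 's \<Rightarrow> 's) \<Rightarrow> bool" where
  "semigroup_on S m \<longleftrightarrow> (\<forall>x\<in>S. \<forall>y\<in>S. m x y \<in> S) \<and>
     (\<forall>x\<in>S. \<forall>y\<in>S. \<forall>z\<in>S. m (m x y) z = m x (m y z))"

definition anti_involution_on :: "'s set \<Rightarrow> ('s \<Rightarrow> 's \<Rightarrow> 's) \<Rightarrow> ('s \<Rightarrow> 's) \<Rightarrow> bool" where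
  "anti_involution_on S m st \<longleftrightarrow> (\<forall>x\<in>S. st x \<in> S \<and> st (st x) = x) \<and>
     (\<forall>x\<in>S. \<forall>y\<in>S. st (m x y) = m (st y) (st x))"

definition twisting :: "'s set \<Rightarrow> ('s \<Rightarrow> 's \<Rightarrow> 's) \<Rightarrow> ('s \<Rightarrow> 's \<Rightarrow> 'r::comm_ring_1) \<Rightarrow> bool" where
  "twisting S m al \<longleftrightarrow>
     (\<forall>x\<in>S. \<forall>y\<in>S. \<forall>z\<in>S. al x y * al (m x y) z = al x (m y z) * al y z)"

text \<open>x \<le>R y iff x in y S^1; x \<le>L y iff x in S^1 y; x \<le>J y iff x in S^1 y S^1.\<close>
definition Rle :: "'s set \<Rightarrow> ('s \<Rightarrow> 's \<Rightarrow> 's) \<Rightarrow> 's \<Rightarrow> 's \<Rightarrow> bool" where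
  "Rle S m x y \<longleftrightarrow> x = y \<or> (\<exists>t\<in>S. x = m y t)"

definition Lle :: "'s set \<Rightarrow> ('s \<Rightarrow> 's \<Rightarrow> 's) \<Rightarrow> 's \<Rightarrow> 's \<Rightarrow> bool" where
  "Lle S m x y \<longleftrightarrow> x = y \<or> (\<exists>s\<in>S. x = m s y)"

definition Jle :: "'s set \<Rightarrow> ('s \<Rightarrow> 's \<Rightarrow> 's) \<Rightarrow> 's \<Rightarrow> 's \<Rightarrow> bool" where
  "Jle S m x y \<longleftrightarrow> x = y \<or> (\<exists>s\<in>S. x = m s y) \<or> (\<exists>t\<in>S. x = m y t)
      \<or> (\<exists>s\<in>S. \<exists>t\<in>S. x = m (m s y) t)"

definition Rrel :: "'s set \<Rightarrow> ('s \<Rightarrow> 's \<Rightarrow> 's) \<Rightarrow> 's \<Rightarrow> 's \<Rightarrow> bool" where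
  "Rrel S m x y \<longleftrightarrow> Rle S m x y \<and> Rle S m y x"

definition Lrel :: "'s set \<Rightarrow> ('s \<Rightarrow> 's \<Rightarrow> 's) \<Rightarrow> 's \<Rightarrow> 's \<Rightarrow> bool" where
  "Lrel S m x y \<longleftrightarrow> Lle S m x y \<and> Lle S m y x"

definition Drel :: "'s set \<Rightarrow> ('s \<Rightarrow> 's \<Rightarrow> 's) \<Rightarrow> 's \<Rightarrow> 's \<Rightarrow> bool" where
  "Drel S m x y \<longleftrightarrow>
     (x, y) \<in> {(a, b). a \<in> S \<and> b \<in> S \<and> (Rrel S m a b \<or> Lrel S m a b)}\<^sup>*"

definition Dclass :: "'s set \<Rightarrow> ('s \<Rightarrow> 's \<Rightarrow> 's) \<Rightarrow> 's \<Rightarrow> 's set" where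
  "Dclass S m x = {y \<in> S. Drel S m x y}"

definition Dclasses :: "'s set \<Rightarrow> ('s \<Rightarrow> 's \<Rightarrow> 's) \<Rightarrow> 's set set" where
  "Dclasses S m = Dclass S m ` S"

definition Lclass :: "'s set \<Rightarrow> ('s \<Rightarrow> 's \<Rightarrow> 's) \<Rightarrow> 's \<Rightarrow> 's set" where
  "Lclass S m x = {y \<in> S. Lrel S m x y}"

definition Lclasses_in :: "'s set \<Rightarrow> ('s \<Rightarrow> 's \<Rightarrow> 's) \<Rightarrow> 's set \<Rightarrow> 's set set" where
  "Lclasses_in S m D = Lclass S m ` D"

definition Dless :: "'s set \<Rightarrow> ('s \<Rightarrow> 's \<Rightarrow> 's) \<Rightarrow> 's set \<Rightarrow> 's set \<Rightarrow> bool" where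
  "Dless S m D1 D2 \<longleftrightarrow> (\<exists>x\<in>D1. \<exists>y\<in>D2. Jle S m x y \<and> \<not> Jle S m y x)"

definition below_D :: "'s set \<Rightarrow> ('s \<Rightarrow> 's \<Rightarrow> 's) \<Rightarrow> 's \<Rightarrow> 's set \<Rightarrow> bool" where
  "below_D S m x D \<longleftrightarrow> Dless S m (Dclass S m x) D"

definition LD :: "'s set \<Rightarrow> ('s \<Rightarrow> 's \<Rightarrow> 's) \<Rightarrow> ('s set \<Rightarrow> 's) \<Rightarrow> 's set \<Rightarrow> 's set" where
  "LD S m one D = Lclass S m (one D)"

definition GD :: "'s set \<Rightarrow> ('s \<Rightarrow> 's \<Rightarrow> 's) \<Rightarrow> ('s \<Rightarrow> 's) \<Rightarrow> ('s set \<Rightarrow> 's) \<Rightarrow> 's set \<Rightarrow> 's set" where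
  "GD S m st one D = LD S m one D \<inter> st ` LD S m one D"

definition inLL :: "'s set \<Rightarrow> ('s \<Rightarrow> 's \<Rightarrow> 's) \<Rightarrow> ('s \<Rightarrow> 's) \<Rightarrow> ('s set \<Rightarrow> 's) \<Rightarrow> 's set
    \<Rightarrow> 's \<Rightarrow> 's \<Rightarrow> bool" where
  "inLL S m st one D x y \<longleftrightarrow> x \<in> LD S m one D \<and> y \<in> st ` LD S m one D"

definition bigLam :: "'s set \<Rightarrow> ('s \<Rightarrow> 's \<Rightarrow> 's) \<Rightarrow> ('s set \<Rightarrow> 'l set) \<Rightarrow> ('s set \<times> 'l) set" where
  "bigLam S m LamD = Sigma (Dclasses S m) LamD"

definition bigle :: "'s set \<Rightarrow> ('s \<Rightarrow> 's \<Rightarrow> 's) \<Rightarrow> ('s set \<Rightarrow> 'l \<Rightarrow> 'l \<Rightarrow> bool)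
    \<Rightarrow> ('s set \<times> 'l) \<Rightarrow> ('s set \<times> 'l) \<Rightarrow> bool" where
  "bigle S m leD p q \<longleftrightarrow>
     Dless S m (fst p) (fst q) \<or> (fst p = fst q \<and> leD (fst p) (snd p) (snd q))"

definition bigM :: "'s set \<Rightarrow> ('s \<Rightarrow> 's \<Rightarrow> 's) \<Rightarrow> ('s set \<Rightarrow> 'l \<Rightarrow> 'm set)
    \<Rightarrow> ('s set \<times> 'l) \<Rightarrow> ('s set \<times> 'm) set" where
  "bigM S m MD p = Lclasses_in S m (fst p) \<times> MD (fst p) (snd p)"

definition bigC :: "'s set \<Rightarrow> ('s \<Rightarrow> 's \<Rightarrow> 's) \<Rightarrow> ('s \<Rightarrow> 's) \<Rightarrow> ('s set \<Rightarrow> 's)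
    \<Rightarrow> ('s set \<Rightarrow> 's \<Rightarrow> 's \<Rightarrow> 'r::comm_ring_1) \<Rightarrow> ('s set \<Rightarrow> 'l \<Rightarrow> 'm \<Rightarrow> 'm \<Rightarrow> ('s \<Rightarrow> 'r))
    \<Rightarrow> ('s set \<Rightarrow> 's) \<Rightarrow> ('s set \<times> 'l) \<Rightarrow> ('s set \<times> 'm) \<Rightarrow> ('s set \<times> 'm) \<Rightarrow> ('s \<Rightarrow> 'r)" where
  "bigC S m st one be CD u p Ls Kt =
     (\<lambda>z. \<Sum>g\<in>GD S m st one (fst p).
        if m (m (st (u (fst Ls))) g) (u (fst Kt)) = z
        then CD (fst p) (snd p) (snd Ls) (snd Kt) g * be (fst p) (st (u (fst Ls))) g
               * be (fst p) (m (st (u (fst Ls))) g) (u (fst Kt))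
        else 0)"

definition twP :: "'s set \<Rightarrow> ('s \<Rightarrow> 's \<Rightarrow> 's) \<Rightarrow> ('s \<Rightarrow> 's) \<Rightarrow> ('s set \<Rightarrow> 's)
    \<Rightarrow> ('s \<Rightarrow> 's \<Rightarrow> 'r::comm_ring_1) \<Rightarrow> ('s set \<Rightarrow> 's) \<Rightarrow> 's set \<Rightarrow> 's set \<Rightarrow> 's set \<Rightarrow> ('s \<Rightarrow> 'r)" where
  "twP S m st one al u D L K =
     (if m (u L) (st (u K)) \<in> GD S m st one D
      then smul (al (u L) (st (u K))) (basis_elt (m (u L) (st (u K))))
      else 0)"

end

theory Submission
  imports Defs
begin

text \<open>
  The basis element \<open>C\<^bsup>(D,\<lambda>)\<^esup>\<^sub>(\<^sub>L\<^sub>,\<^sub>s\<^sub>)\<^sub>(\<^sub>K\<^sub>,\<^sub>t\<^sub>)\<close> is the image of \<open>C\<^sup>\<lambda>\<^sub>s\<^sub>t\<close>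
  under the \<open>R\<close>-linear map \<open>T\<^sub>L\<^sub>K : R\<^sup>\<beta>[G\<^sub>D] \<rightarrow> R\<^sup>\<alpha>[S]\<close> sending \<open>g\<close> to
  \<open>\<beta>\<^sub>D(u\<^sub>L\<^sup>*,g) \<beta>\<^sub>D(u\<^sub>L\<^sup>*g,u\<^sub>K) u\<^sub>L\<^sup>* g u\<^sub>K\<close>; by Green's lemma it is injective on \<open>G\<^sub>D\<close>,
  with values in \<open>D\<close> and unit coefficients. The cocycle conditions give
  \<open>T\<^sub>L\<^sub>'\<^sub>L(F) T\<^sub>K\<^sub>K\<^sub>'(F') = T\<^sub>L\<^sub>'\<^sub>K\<^sub>'(F P\<^sub>L\<^sub>K F')\<close> when \<open>u\<^sub>L u\<^sub>K\<^sup>* \<in> G\<^sub>D\<close>; otherwise, by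
  stability of finite semigroups, \<open>P\<^sub>L\<^sub>K = 0\<close> and all products lie strictly below \<open>D\<close>. Elements
  below \<open>D\<close> and \<open>T\<^sub>L\<^sub>'\<^sub>K\<^sub>'\<close>-images of \<open>R\<^sup>\<beta>[G\<^sub>D](<\<lambda>)\<close> lie in \<open>R\<^sup>\<alpha>[S](<(D,\<lambda>))\<close>, and
  conversely coefficients at the points of \<open>D\<close> can be read back through \<open>T\<^sub>L\<^sub>'\<^sub>K\<^sub>'\<close>. So the
  conditions defining \<open>\<phi>\<^bsup>(D,\<lambda>)\<^esup>(C\<^sub>(\<^sub>L\<^sub>,\<^sub>s\<^sub>),C\<^sub>(\<^sub>K\<^sub>,\<^sub>t\<^sub>))\<close> and
  \<open>\<phi>\<^sup>\<lambda>\<^sub>P\<^sub>L\<^sub>K(C\<^sub>s,C\<^sub>t)\<close> hold for the same scalars, and the two definite descriptions agree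
  without any appeal to uniqueness.
\<close>

section \<open>Green's relations in a semigroup given by a carrier\<close>

locale carrier_semigroup =
  fixes S :: "'s set" and m :: "'s \<Rightarrow> 's \<Rightarrow> 's"
  assumes semigroup: "semigroup_on S m"
begin

lemma closed [simp, intro]: "x \<in> S \<Longrightarrow> y \<in> S \<Longrightarrow> m x y \<in> S"
  using semigroup unfolding semigroup_on_def by blast

lemma assoc: "x \<in> S \<Longrightarrow> y \<in> S \<Longrightarrow> z \<in> S \<Longrightarrow> m (m x y) z = m x (m y z)"
  using semigroup unfolding semigroup_on_def by blast

text \<open>For an idempotent \<open>e\<close>, the \<open>\<L>\<close>-, \<open>\<R>\<close>- and \<open>\<H>\<close>-class of \<open>e\<close> in equational form.\<close>

definition inL :: "'s \<Rightarrow> 's \<Rightarrow> bool" where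
  "inL e x \<longleftrightarrow> x \<in> S \<and> m x e = x \<and> (\<exists>z\<in>S. m z x = e)"

definition inR :: "'s \<Rightarrow> 's \<Rightarrow> bool" where
  "inR e x \<longleftrightarrow> x \<in> S \<and> m e x = x \<and> (\<exists>z\<in>S. m x z = e)"

definition inH :: "'s \<Rightarrow> 's \<Rightarrow> bool" where
  "inH e x \<longleftrightarrow> inL e x \<and> inR e x"

lemma inH_in_carrier: "inH e x \<Longrightarrow> x \<in> S"
  unfolding inH_def inL_def by blast

lemma Lclass_iff_inL:
  assumes "e \<in> S" "m e e = e"
  shows "x \<in> Lclass S m e \<longleftrightarrow> inL e x"
proof
  assume "x \<in> Lclass S m e"
  then have x: "x \<in> S" "Lle S m e x" "Lle S m x e" unfolding Lclass_def Lrel_def by auto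
  from x(3) have "m x e = x" using assms by (auto simp: Lle_def assoc)
  moreover from x(2) have "\<exists>z\<in>S. m z x = e" using assms unfolding Lle_def by auto
  ultimately show "inL e x" using x unfolding inL_def by blast
next
  assume "inL e x"
  then obtain z where "x \<in> S" "m x e = x" "z \<in> S" "m z x = e" unfolding inL_def by blast
  then show "x \<in> Lclass S m e" unfolding Lclass_def Lrel_def Lle_def by force
qed

lemma inR_imp_Rrel: "inR e x \<Longrightarrow> Rrel S m x e"
  unfolding inR_def Rrel_def Rle_def by force

lemma inR_iff_Rrel:
  assumes "e \<in> S" "m e e = e"
  shows "inR e x \<longleftrightarrow> x \<in> S \<and> Rrel S m x e"
proof
  assume "inR e x"
  then show "x \<in> S \<and> Rrel S m x e" using inR_imp_Rrel unfolding inR_def by blast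
next
  assume x: "x \<in> S \<and> Rrel S m x e"
  then have le: "Rle S m x e" "Rle S m e x" unfolding Rrel_def by auto
  from le(1) have "m e x = x" using x assms unfolding Rle_def by (auto simp flip: assoc)
  moreover from le(2) have "\<exists>z\<in>S. m x z = e" using assms unfolding Rle_def by auto
  ultimately show "inR e x" using x unfolding inR_def by blast
qed

lemma inL_mult:
  assumes "inL e x" "inL e y" "inR e y" "e \<in> S"
  shows "inL e (m x y)"
proof -
  obtain z w where h: "x \<in> S" "m x e = x" "z \<in> S" "m z x = e" "y \<in> S" "m y e = y" "w \<in> S"
    "m w y = e" "m e y = y"
    using assms unfolding inL_def inR_def by blast
  have "m (m x y) e = m x y" using h(1,5,6) assms(4) by (simp add: assoc)
  moreover have "m (m w z) (m x y) = m w (m (m z x) y)" using h(1,3,5,7) by (simp add: assoc)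
  then have "m (m w z) (m x y) = e" by (simp only: h(4,9,8))
  ultimately show ?thesis unfolding inL_def using h(1,3,5,7) by blast
qed

lemma inR_mult:
  assumes "inR e x" "inL e x" "inR e y" "e \<in> S"
  shows "inR e (m x y)"
proof -
  obtain z w where h: "x \<in> S" "m e x = x" "z \<in> S" "m x z = e" "y \<in> S" "m e y = y" "w \<in> S"
    "m y w = e" "m x e = x"
    using assms unfolding inL_def inR_def by blast
  have "m e (m x y) = m x y" using h(1,2,5) assms(4) by (simp flip: assoc)
  moreover have "m (m x y) (m w z) = m (m x (m y w)) z" using h(1,3,5,7) by (simp add: assoc)
  then have "m (m x y) (m w z) = e" by (simp only: h(8,9,4))
  ultimately show ?thesis unfolding inR_def using h(1,3,5,7) by blast
qed

lemma inH_mult: "inH e x \<Longrightarrow> inH e y \<Longrightarrow> e \<in> S \<Longrightarrow> inH e (m x y)"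
  unfolding inH_def using inL_mult inR_mult by blast

lemma inH_sandwich_inj:
  assumes "inL e a" "inR e b" "inH e g" "inH e g'" "e \<in> S"
    and eq: "m (m a g) b = m (m a g') b"
  shows "g = g'"
proof -
  obtain z1 z2 where z: "z1 \<in> S" "m z1 a = e" "z2 \<in> S" "m b z2 = e"
    using assms unfolding inL_def inR_def by blast
  have S: "a \<in> S" "b \<in> S" "g \<in> S" "g' \<in> S"
    using assms unfolding inH_def inL_def inR_def by auto
  have unit: "m e h = h" "m h e = h" if "inH e h" for h
    using that unfolding inH_def inL_def inR_def by auto
  have peel: "m z1 (m (m (m a h) b) z2) = h" if "inH e h" "h \<in> S" for h
  proof -
    have "m z1 (m (m (m a h) b) z2) = m (m (m z1 a) h) (m b z2)"
      using S z(1,3) that(2) by (simp add: assoc)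
    then show ?thesis by (simp only: z unit[OF that(1)])
  qed
  show ?thesis using peel[OF assms(3) S(3)] peel[OF assms(4) S(4)] unfolding eq by simp
qed

lemma Lle_trans:
  "y \<in> S \<Longrightarrow> z \<in> S \<Longrightarrow> Lle S m x y \<Longrightarrow> Lle S m y z \<Longrightarrow> Lle S m x z"
  unfolding Lle_def by (auto simp flip: assoc)

lemma Rle_trans:
  "y \<in> S \<Longrightarrow> z \<in> S \<Longrightarrow> Rle S m x y \<Longrightarrow> Rle S m y z \<Longrightarrow> Rle S m x z"
  unfolding Rle_def by (auto simp: assoc)

lemma Lrel_trans: "x \<in> S \<Longrightarrow> y \<in> S \<Longrightarrow> z \<in> S \<Longrightarrow> Lrel S m x y \<Longrightarrow> Lrel S m y z \<Longrightarrow> Lrel S m x z"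
  unfolding Lrel_def using Lle_trans by blast

lemma Lrel_sym: "Lrel S m x y \<Longrightarrow> Lrel S m y x"
  unfolding Lrel_def by blast

lemma Rrel_sym: "Rrel S m x y \<Longrightarrow> Rrel S m y x"
  unfolding Rrel_def by blast

lemma Lclass_eq: "x \<in> S \<Longrightarrow> y \<in> S \<Longrightarrow> Lrel S m x y \<Longrightarrow> Lclass S m x = Lclass S m y"
  unfolding Lclass_def using Lrel_trans Lrel_sym by blast

lemma Lclass_eq_of_mem: "y \<in> Lclass S m x \<Longrightarrow> x \<in> S \<Longrightarrow> Lclass S m y = Lclass S m x"
  using Lclass_eq[of y x] Lrel_sym unfolding Lclass_def by blast

definition LR_step :: "('s \<times> 's) set" where
  "LR_step = {(a, b). a \<in> S \<and> b \<in> S \<and> (Rrel S m a b \<or> Lrel S m a b)}"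

lemma Drel_iff_rtrancl: "Drel S m x y \<longleftrightarrow> (x, y) \<in> LR_step\<^sup>*"
  unfolding Drel_def LR_step_def ..

lemma Drel_sym: "Drel S m x y \<Longrightarrow> Drel S m y x"
proof -
  have "sym LR_step" unfolding LR_step_def sym_def using Lrel_sym Rrel_sym by blast
  then show "Drel S m x y \<Longrightarrow> Drel S m y x"
    unfolding Drel_iff_rtrancl by (meson sym_rtrancl symD)
qed

lemma Drel_trans: "Drel S m x y \<Longrightarrow> Drel S m y z \<Longrightarrow> Drel S m x z"
  unfolding Drel_iff_rtrancl by simp

lemma Drel_if_Rrel: "x \<in> S \<Longrightarrow> y \<in> S \<Longrightarrow> Rrel S m x y \<Longrightarrow> Drel S m x y"
  unfolding Drel_iff_rtrancl LR_step_def by blast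

lemma Drel_if_Lrel: "x \<in> S \<Longrightarrow> y \<in> S \<Longrightarrow> Lrel S m x y \<Longrightarrow> Drel S m x y"
  unfolding Drel_iff_rtrancl LR_step_def by blast

lemma Dclass_self: "x \<in> S \<Longrightarrow> x \<in> Dclass S m x"
  unfolding Dclass_def Drel_iff_rtrancl by blast

lemma Dclasses_eq_Dclass: "D \<in> Dclasses S m \<Longrightarrow> x \<in> D \<Longrightarrow> D = Dclass S m x"
  unfolding Dclasses_def Dclass_def using Drel_sym Drel_trans by blast

lemma Dclasses_subset: "D \<in> Dclasses S m \<Longrightarrow> D \<subseteq> S"
  unfolding Dclasses_def Dclass_def by auto

lemma Jle_iff_Lle_Rle:
  assumes "y \<in> S"
  shows "Jle S m x y \<longleftrightarrow> (\<exists>z\<in>S. Lle S m x z \<and> Rle S m z y)"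
proof
  assume "Jle S m x y"
  then show "\<exists>z\<in>S. Lle S m x z \<and> Rle S m z y"
    unfolding Jle_def
  proof (elim disjE bexE)
    fix s t assume "s \<in> S" "t \<in> S" "x = m (m s y) t"
    then have "Lle S m x (m y t) \<and> Rle S m (m y t) y"
      using assms unfolding Lle_def Rle_def by (auto simp: assoc)
    then show ?thesis using \<open>t \<in> S\<close> assms by blast
  qed (use assms in \<open>auto simp: Lle_def Rle_def\<close>)
next
  assume "\<exists>z\<in>S. Lle S m x z \<and> Rle S m z y"
  then show "Jle S m x y"
    unfolding Jle_def Lle_def Rle_def using assms by (elim bexE conjE disjE) (simp_all flip: assoc; blast)+
qed

lemma Rle_Lle_commute:
  assumes "y \<in> S" "z \<in> S" "Rle S m x y" "Lle S m y z"
  obtains w where "w \<in> S" "Lle S m x w" "Rle S m w z"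
proof -
  consider "x = y" | t where "t \<in> S" "x = m y t"
    using assms(3) unfolding Rle_def by blast
  then show ?thesis
  proof cases
    case 1
    show ?thesis by (rule that[of z]) (use 1 assms(2,4) in \<open>simp_all add: Rle_def\<close>)
  next
    case (2 t)
    from assms(4) consider "y = z" | s where "s \<in> S" "y = m s z"
      unfolding Lle_def by blast
    then show ?thesis
    proof cases
      case 1
      show ?thesis by (rule that[of x]) (use 1 2 assms(2) in \<open>auto simp: Lle_def Rle_def\<close>)
    next
      case (2 s)
      with \<open>t \<in> S\<close> \<open>x = m y t\<close> have "x = m s (m z t)" using assms(2) by (simp add: assoc)
      show ?thesis by (rule that[of "m z t"])
        (use 2 \<open>t \<in> S\<close> \<open>x = m s (m z t)\<close> assms(2) in \<open>auto simp: Lle_def Rle_def\<close>)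
    qed
  qed
qed

lemma Jle_trans:
  assumes "x \<in> S" "y \<in> S" "z \<in> S" "Jle S m x y" "Jle S m y z"
  shows "Jle S m x z"
proof -
  obtain v where v: "v \<in> S" "Lle S m x v" "Rle S m v y"
    using assms(2,4) Jle_iff_Lle_Rle by blast
  obtain w where w: "w \<in> S" "Lle S m y w" "Rle S m w z"
    using assms(3,5) Jle_iff_Lle_Rle by blast
  obtain c where "c \<in> S" "Lle S m v c" "Rle S m c w"
    using Rle_Lle_commute[OF assms(2) w(1) v(3) w(2)] .
  then have "Lle S m x c" "Rle S m c z"
    using Lle_trans[OF v(1) _ v(2)] Rle_trans[OF w(1) assms(3) _ w(3)] by blast+
  then show ?thesis using Jle_iff_Lle_Rle[OF assms(3)] \<open>c \<in> S\<close> by blast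
qed

lemma Drel_imp_Jle: "Drel S m x y \<Longrightarrow> Jle S m x y"
  unfolding Drel_iff_rtrancl
proof (induction rule: rtrancl_induct)
  case base
  then show ?case by (simp add: Jle_def)
next
  case (step y z)
  then have yz: "y \<in> S" "z \<in> S" "Jle S m y z"
    unfolding LR_step_def Rrel_def Lrel_def Rle_def Lle_def Jle_def by auto
  show ?case
  proof (cases "x = y")
    case False
    with step.hyps(1) have "x \<in> S"
      by (induction rule: rtrancl_induct) (auto simp: LR_step_def)
    then show ?thesis using Jle_trans step.IH yz by blast
  qed (use yz in simp)
qed

lemma Dless_irrefl:
  assumes "D \<in> Dclasses S m"
  shows "\<not> Dless S m D D"
proof
  assume "Dless S m D D"
  then obtain x y where xy: "x \<in> D" "y \<in> D" "\<not> Jle S m y x" unfolding Dless_def by blast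
  have "Drel S m x y" using xy Dclasses_eq_Dclass[OF assms xy(1)] unfolding Dclass_def by blast
  then show False using xy(3) Drel_imp_Jle Drel_sym by blast
qed

lemma below_DI:
  assumes "D \<in> Dclasses S m" "e \<in> D" "z \<in> S" "Jle S m z e" "\<not> Jle S m e z"
  shows "below_D S m z D"
  unfolding below_D_def Dless_def using assms Dclass_self by blast

lemma idempotent_Jle_factor:
  assumes "Jle S m e z" "e \<in> S" "m e e = e" "z = m a (m p b)" "a \<in> S" "p \<in> S" "b \<in> S"
  shows "\<exists>s\<in>S. \<exists>t\<in>S. e = m s (m p t)"
proof -
  have zS: "z \<in> S" using assms(4-7) by simp
  obtain s t where st: "s \<in> S" "t \<in> S" "e = m s (m z t)"
    using assms(1) unfolding Jle_def
  proof (elim disjE bexE)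
    assume "e = z"
    then have "e = m e (m z e)" using assms(3) by simp
    then show thesis using that assms(2) by blast
  next
    fix s assume "s \<in> S" "e = m s z"
    then have "e = m s (m z e)" using assms(2,3) zS by (simp flip: assoc)
    then show thesis using that \<open>s \<in> S\<close> assms(2) by blast
  next
    fix t assume "t \<in> S" "e = m z t"
    then have "e = m e (m z t)" using assms(3) by simp
    then show thesis using that \<open>t \<in> S\<close> assms(2) by blast
  next
    fix s t assume "s \<in> S" "t \<in> S" "e = m (m s z) t"
    then show thesis using that zS by (simp add: assoc)
  qed
  have "e = m (m s a) (m p (m b t))"
    using st assms(4-7) by (simp add: assoc)
  then show ?thesis using st(1,2) assms(5-7) by blast
qed

lemma sandwich_Green:
  assumes e: "e \<in> S" and a: "inL e a" and g: "inH e g" and k: "inR e k"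
  defines "z \<equiv> m (m a g) k"
  shows "z \<in> S" "Lrel S m z k" "Rrel S m z a" "Drel S m e z"
proof -
  have S: "a \<in> S" "g \<in> S" "k \<in> S" using a g k unfolding inH_def inL_def inR_def by auto
  show zS: "z \<in> S" unfolding z_def using S by simp
  have "inL e (m a g)" using inL_mult[OF a _ _ e] g unfolding inH_def by blast
  then obtain w where w: "w \<in> S" "m w (m a g) = e" unfolding inL_def by blast
  have "m w z = m (m w (m a g)) k" unfolding z_def using w(1) S by (simp add: assoc)
  then have "k = m w z" using w k unfolding inR_def by simp
  then show Lr: "Lrel S m z k" unfolding Lrel_def Lle_def z_def using w S by auto
  have "inR e (m g k)" using inR_mult[OF _ _ k e] g unfolding inH_def by blast
  then obtain w' where w': "w' \<in> S" "m (m g k) w' = e" unfolding inR_def by blast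
  have "m z w' = m a (m (m g k) w')" unfolding z_def using w'(1) S by (simp add: assoc)
  then have "a = m z w'" using w' a unfolding inL_def by simp
  moreover have "z = m a (m g k)" unfolding z_def using S by (simp add: assoc)
  ultimately show "Rrel S m z a" unfolding Rrel_def Rle_def using w' S by auto
  have "Rrel S m k e" using inR_imp_Rrel[OF k] .
  then have "Drel S m e k" using Drel_if_Rrel Rrel_sym e S by blast
  moreover have "Drel S m k z" using Drel_if_Lrel Lr Lrel_sym S zS by blast
  ultimately show "Drel S m e z" using Drel_trans by blast
qed

lemma Rle_right_factor: "Rle S m y a \<Longrightarrow> m a f = a \<Longrightarrow> f \<in> S \<Longrightarrow> \<exists>c\<in>S. y = m a c"
  unfolding Rle_def by (metis)

lemma Lle_left_factor: "Lle S m y a \<Longrightarrow> m f a = a \<Longrightarrow> f \<in> S \<Longrightarrow> \<exists>c\<in>S. y = m c a"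
  unfolding Lle_def by (metis)

lemma Rle_absorb: "Rle S m y a \<Longrightarrow> a \<in> S \<Longrightarrow> f \<in> S \<Longrightarrow> m f a = a \<Longrightarrow> m f y = y"
  unfolding Rle_def by (auto simp flip: assoc)

lemma Lle_absorb: "Lle S m y k \<Longrightarrow> k \<in> S \<Longrightarrow> f \<in> S \<Longrightarrow> m k f = k \<Longrightarrow> m y f = y"
  unfolding Lle_def by (auto simp: assoc)

text \<open>The witness is \<open>g = x\<^sub>1 y x\<^sub>2\<close>, where \<open>x\<^sub>1 a = e = k x\<^sub>2\<close>.\<close>

lemma sandwich_decomposition:
  assumes e: "e \<in> S" "m e e = e" and a: "inL e a" and k: "inR e k" and y: "y \<in> S"
    and ya: "Rrel S m y a" and yk: "Lrel S m y k"
  shows "\<exists>g. inH e g \<and> y = m (m a g) k"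
proof -
  obtain x1 where x1: "x1 \<in> S" "m x1 a = e" using a unfolding inL_def by blast
  obtain x2 where x2: "x2 \<in> S" "m k x2 = e" using k unfolding inR_def by blast
  have aS: "a \<in> S" "m a e = a" using a unfolding inL_def by auto
  have kS: "k \<in> S" "m e k = k" using k unfolding inR_def by auto
  have "m (m a x1) a = a" using aS x1 by (simp add: assoc)
  then have h1: "m a (m x1 y) = y"
    using Rle_absorb[of y a "m a x1"] ya aS x1 y unfolding Rrel_def by (simp add: assoc)
  have "m k (m x2 k) = k" using kS x2 by (simp flip: assoc)
  then have h2: "m y (m x2 k) = y"
    using Lle_absorb[of y k "m x2 k"] yk kS x2 unfolding Lrel_def by simp
  obtain t where t: "t \<in> S" "a = m y t"
    using Rle_right_factor[OF _ h2] ya x2 kS unfolding Rrel_def by auto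
  obtain s where s: "s \<in> S" "k = m s y"
    using Lle_left_factor[of k y "m a x1"] h1 yk aS x1 y unfolding Lrel_def by (auto simp: assoc)
  define g where "g = m x1 (m y x2)"
  have gS: "g \<in> S" unfolding g_def using x1(1) x2(1) y by simp
  have "m (m a g) k = m (m a (m x1 y)) (m x2 k)"
    unfolding g_def using aS(1) x1(1) x2(1) y kS(1) by (simp add: assoc)
  then have yeq: "m (m a g) k = y" by (simp only: h1 h2)
  have "m (m x1 a) g = m x1 (m (m a (m x1 y)) x2)"
    unfolding g_def using x1(1) x2(1) y aS(1) by (simp add: assoc)
  then have eg: "m e g = g" unfolding g_def by (simp only: h1 x1(2))
  have "m g (m k x2) = m x1 (m (m y (m x2 k)) x2)"
    unfolding g_def using x1(1) x2(1) y kS(1) by (simp add: assoc)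
  then have ge: "m g e = g" unfolding g_def by (simp only: h2 x2(2))
  have "m (m s a) g = m (m s (m a (m x1 y))) x2"
    unfolding g_def using s(1) x1(1) x2(1) y aS(1) by (simp add: assoc)
  then have sg: "m (m s a) g = e" by (simp only: h1 s(2)[symmetric] x2(2))
  have "m g (m k t) = m x1 (m (m y (m x2 k)) t)"
    unfolding g_def using t(1) x1(1) x2(1) y kS(1) by (simp add: assoc)
  then have gt: "m g (m k t) = e" by (simp only: h2 t(2)[symmetric] x1(2))
  have "inH e g"
    unfolding inH_def inL_def inR_def using gS eg ge sg gt s(1) t(1) aS(1) kS(1) by auto
  then show ?thesis using yeq by blast
qed

end

locale finite_carrier_semigroup = carrier_semigroup S m for S :: "'s set" and m +
  assumes finite_carrier: "finite S"
begin

text \<open>\<open>spow b n = b\<^sup>n\<^sup>+\<^sup>1\<close>: there is no identity to serve as \<open>b\<^sup>0\<close>.\<close>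

definition spow :: "'s \<Rightarrow> nat \<Rightarrow> 's" where
  "spow b n = (m b ^^ n) b"

lemma spow_0 [simp]: "spow b 0 = b"
  unfolding spow_def by simp

lemma spow_Suc: "spow b (Suc n) = m b (spow b n)"
  unfolding spow_def by simp

lemma spow_in_carrier [simp]: "b \<in> S \<Longrightarrow> spow b n \<in> S"
  by (induction n) (auto simp: spow_Suc)

lemma spow_mult: "b \<in> S \<Longrightarrow> m (spow b i) (spow b j) = spow b (i + j + 1)"
  by (induction i) (simp_all add: spow_Suc assoc)

lemma spow_iterate:
  assumes "s \<in> S" "b \<in> S" "e \<in> S" "e = m s (m e b)"
  shows "e = m (spow s n) (m e (spow b n))"
proof (induction n)
  case (Suc n)
  let ?E = "m (spow s n) (m e (spow b n))"
  have "e = m s (m e b)" by (rule assms(4))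
  also have "\<dots> = m s (m ?E b)" by (simp only: Suc.IH[symmetric])
  also have "\<dots> = m (spow s (Suc n)) (m e (spow b (Suc n)))"
    using assms spow_mult[of b n 0] by (simp add: spow_Suc assoc)
  finally show ?case .
qed (use assms in simp)

lemma spow_period:
  assumes "b \<in> S"
  obtains i d where "spow b i = spow b (i + d + 1)"
proof -
  have "\<not> inj (spow b)"
  proof
    assume "inj (spow b)"
    then have "infinite (range (spow b))" using finite_imageD by blast
    moreover have "range (spow b) \<subseteq> S" using assms by auto
    ultimately show False using finite_carrier finite_subset by blast
  qed
  then obtain i j where "i < j" "spow b i = spow b j"
    unfolding inj_def by (metis linorder_neqE_nat)
  then show ?thesis using that[of i "j - i - 1"] by simp
qed

text \<open>Stability of finite semigroups: iterating \<open>e = s e b\<close> gives \<open>e = s\<^sup>n e b\<^sup>n\<close>, and a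
  repetition \<open>b\<^sup>i = b\<^sup>i\<^sup>+\<^sup>d\<^sup>+\<^sup>1\<close> then yields \<open>e = e b\<^sup>d\<^sup>+\<^sup>1\<close>.\<close>

lemma stable_right:
  assumes "e \<in> S" "q \<in> S" "s \<in> S" "t \<in> S" "m e q = q" "e = m s (m q t)"
  shows "\<exists>v\<in>S. m q v = e"
proof -
  define b where "b = m q t"
  have bS: "b \<in> S" using assms b_def by simp
  have eb: "m e b = b" unfolding b_def using assms by (simp flip: assoc)
  have it: "e = m (spow s n) (m e (spow b n))" for n
    using spow_iterate[of s b e] assms bS eb b_def by simp
  obtain i d where id: "spow b i = spow b (i + d + 1)" using spow_period[OF bS] .
  have "e = m (spow s i) (m e (m (spow b i) (spow b d)))"
    using it[of i] id spow_mult[of b i d] bS by simp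
  also have "\<dots> = m (m (spow s i) (m e (spow b i))) (spow b d)"
    using bS assms by (simp add: assoc)
  finally have e1: "e = m e (spow b d)" by (simp only: it[symmetric])
  show ?thesis
  proof (cases d)
    case 0
    then show ?thesis using e1 eb b_def assms by auto
  next
    case (Suc d')
    then have "e = m e (m b (spow b d'))" using e1 by (simp add: spow_Suc)
    also have "\<dots> = m q (m t (spow b d'))"
      using bS assms(1,2,4) eb unfolding b_def by (simp flip: assoc)
    finally show ?thesis using assms bS by (intro bexI[of _ "m t (spow b d')"]) auto
  qed
qed

end

locale involuted_semigroup = carrier_semigroup S m for S :: "'s set" and m +
  fixes st :: "'s \<Rightarrow> 's"
  assumes anti_involution: "anti_involution_on S m st"
begin

lemma st_in_carrier [simp, intro]: "x \<in> S \<Longrightarrow> st x \<in> S"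
  using anti_involution unfolding anti_involution_on_def by blast

lemma st_st [simp]: "x \<in> S \<Longrightarrow> st (st x) = x"
  using anti_involution unfolding anti_involution_on_def by blast

lemma st_mult: "x \<in> S \<Longrightarrow> y \<in> S \<Longrightarrow> st (m x y) = m (st y) (st x)"
  using anti_involution unfolding anti_involution_on_def by blast

lemma Lrel_st_iff_Rrel:
  assumes "x \<in> S" "y \<in> S"
  shows "Lrel S m (st x) (st y) \<longleftrightarrow> Rrel S m x y"
proof -
  have Lle: "Lle S m (st x) (st y) \<longleftrightarrow> Rle S m x y" if "x \<in> S" "y \<in> S" for x y
    using that unfolding Lle_def Rle_def by (metis st_in_carrier st_mult st_st)
  show ?thesis unfolding Lrel_def Rrel_def using Lle assms by blast
qed

lemma Rrel_st_iff_Lrel: "x \<in> S \<Longrightarrow> y \<in> S \<Longrightarrow> Rrel S m (st x) (st y) \<longleftrightarrow> Lrel S m x y"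
  using Lrel_st_iff_Rrel[of "st x" "st y"] by simp

lemma Drel_st: "Drel S m x y \<Longrightarrow> Drel S m (st x) (st y)"
  unfolding Drel_iff_rtrancl
proof (induction rule: rtrancl_induct)
  case (step y z)
  then have "(st y, st z) \<in> LR_step"
    unfolding LR_step_def using Lrel_st_iff_Rrel Rrel_st_iff_Lrel by auto
  then show ?case using step by simp
qed simp

lemma inL_st_of_inR: "inR e x \<Longrightarrow> e \<in> S \<Longrightarrow> st e = e \<Longrightarrow> inL e (st x)"
  unfolding inR_def inL_def by (metis st_in_carrier st_mult)

lemma inR_st_of_inL: "inL e x \<Longrightarrow> e \<in> S \<Longrightarrow> st e = e \<Longrightarrow> inR e (st x)"
  unfolding inR_def inL_def by (metis st_in_carrier st_mult)

lemma st_Lclass_iff_inR: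
  assumes "e \<in> S" "m e e = e" "st e = e"
  shows "y \<in> st ` Lclass S m e \<longleftrightarrow> inR e y"
proof
  assume "y \<in> st ` Lclass S m e"
  then show "inR e y" using inR_st_of_inL Lclass_iff_inL assms by blast
next
  assume "inR e y"
  then have "st y \<in> Lclass S m e" "y \<in> S"
    using inL_st_of_inR Lclass_iff_inL assms unfolding inR_def by blast+
  then show "y \<in> st ` Lclass S m e" by (metis image_eqI st_st)
qed

end

locale finite_involuted_semigroup = finite_carrier_semigroup S m + involuted_semigroup S m st
  for S m st
begin

lemma stable_left:
  assumes "e \<in> S" "q \<in> S" "s \<in> S" "t \<in> S" "m q e = q" "e = m s (m q t)" "st e = e"
  shows "\<exists>v\<in>S. m v q = e"
proof -
  have "m e (st q) = st q" using st_mult[of q e] assms by simp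
  moreover have "e = m (st t) (m (st q) (st s))"
    using arg_cong[OF assms(6), of st] assms by (simp add: st_mult assoc)
  ultimately obtain v where "v \<in> S" "m (st q) v = e"
    using stable_right[of e "st q" "st t" "st s"] assms by auto
  then show ?thesis using st_mult[of "st q" v] assms(2,7) by (metis st_in_carrier st_st)
qed

lemma stable_inH:
  assumes "e \<in> S" "st e = e" "inR e x" "inL e y" "s \<in> S" "t \<in> S"
    and eq: "e = m s (m (m x y) t)"
  shows "inH e (m x y)"
proof -
  have x: "x \<in> S" "m e x = x" using assms(3) unfolding inR_def by auto
  have y: "y \<in> S" "m y e = y" using assms(4) unfolding inL_def by auto
  have q1: "m e (m x y) = m x y" using x y assms(1) by (simp flip: assoc)
  have q2: "m (m x y) e = m x y" using x y assms(1) by (simp add: assoc)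
  obtain v where "v \<in> S" "m (m x y) v = e"
    using stable_right[OF assms(1) _ assms(5,6) q1 eq] x y by auto
  moreover obtain w where "w \<in> S" "m w (m x y) = e"
    using stable_left[OF assms(1) _ assms(5,6) q2 eq assms(2)] x y by auto
  ultimately show ?thesis unfolding inH_def inL_def inR_def using q1 q2 x y by auto
qed

end

section \<open>Linear combinations and spans in coefficient-function algebras\<close>

definition lincomb :: "'j set \<Rightarrow> ('j \<Rightarrow> 'b) \<Rightarrow> ('j \<Rightarrow> 'r::comm_ring_1) \<Rightarrow> 'b \<Rightarrow> 'r" where
  "lincomb J \<psi> v = (\<lambda>z. \<Sum>j\<in>J. if \<psi> j = z then v j else 0)"

lemma sum_fun_apply: "(\<Sum>i\<in>A. f i) x = (\<Sum>i\<in>A. f i x)"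
  by (induction A rule: infinite_finite_induct) auto

lemma if_mult_sum_sum:
  fixes A :: "'r::comm_ring_1"
  assumes "finite I" "finite J"
  shows "(if c then A * (\<Sum>i\<in>I. if p i then a i else 0) * (\<Sum>j\<in>J. if q j then b j else 0) else 0)
   = (\<Sum>i\<in>I. \<Sum>j\<in>J. if p i \<and> q j \<and> c then A * a i * b j else 0)"
proof (cases c)
  case True
  have "A * (\<Sum>i\<in>I. if p i then a i else 0) * (\<Sum>j\<in>J. if q j then b j else 0)
      = (\<Sum>i\<in>I. \<Sum>j\<in>J. A * (if p i then a i else 0) * (if q j then b j else 0))"
    by (simp add: sum_distrib_left sum_distrib_right mult.assoc, subst sum.swap, simp)
  also have "\<dots> = (\<Sum>i\<in>I. \<Sum>j\<in>J. if p i \<and> q j \<and> c then A * a i * b j else 0)"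
    using True by (intro sum.cong refl) auto
  finally show ?thesis using True by simp
qed simp

lemma sum_delta_conj:
  assumes "finite X" "a \<in> X"
  shows "(\<Sum>x\<in>X. if a = x \<and> P x then f x else 0) = (if P a then f a else (0::'r::comm_ring_1))"
proof -
  have "(\<Sum>x\<in>X. if a = x \<and> P x then f x else 0) = (\<Sum>x\<in>X. if x = a then (if P x then f x else 0) else 0)"
    by (intro sum.cong refl) auto
  also have "\<dots> = (if P a then f a else 0)" using assms by simp
  finally show ?thesis .
qed

lemma tw_mult_lincomb:
  fixes A :: "'b \<Rightarrow> 'b \<Rightarrow> 'r::comm_ring_1"
  assumes fin: "finite X" "finite J1" "finite J2" and im: "\<psi>1 ` J1 \<subseteq> X" "\<psi>2 ` J2 \<subseteq> X"
  shows "tw_mult X mm A (lincomb J1 \<psi>1 v1) (lincomb J2 \<psi>2 v2)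
       = lincomb (J1 \<times> J2) (\<lambda>(i,j). mm (\<psi>1 i) (\<psi>2 j)) (\<lambda>(i,j). A (\<psi>1 i) (\<psi>2 j) * v1 i * v2 j)"
proof (rule ext)
  fix z
  have "tw_mult X mm A (lincomb J1 \<psi>1 v1) (lincomb J2 \<psi>2 v2) z
      = (\<Sum>x\<in>X. \<Sum>y\<in>X. \<Sum>i\<in>J1. \<Sum>j\<in>J2. if \<psi>1 i = x \<and> \<psi>2 j = y \<and> mm x y = z then A x y * v1 i * v2 j else 0)"
    unfolding tw_mult_def lincomb_def by (intro sum.cong refl) (rule if_mult_sum_sum[OF fin(2,3)])
  also have "\<dots> = (\<Sum>i\<in>J1. \<Sum>j\<in>J2. \<Sum>x\<in>X. \<Sum>y\<in>X. if \<psi>1 i = x \<and> \<psi>2 j = y \<and> mm x y = z then A x y * v1 i * v2 j else 0)"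
  proof -
    let ?F = "\<lambda>x y i j. if \<psi>1 i = x \<and> \<psi>2 j = y \<and> mm x y = z then A x y * v1 i * v2 j else 0"
    have "(\<Sum>x\<in>X. \<Sum>y\<in>X. \<Sum>i\<in>J1. \<Sum>j\<in>J2. ?F x y i j) = (\<Sum>x\<in>X. \<Sum>i\<in>J1. \<Sum>y\<in>X. \<Sum>j\<in>J2. ?F x y i j)"
      by (rule sum.cong[OF refl], rule sum.swap)
    also have "\<dots> = (\<Sum>x\<in>X. \<Sum>i\<in>J1. \<Sum>j\<in>J2. \<Sum>y\<in>X. ?F x y i j)"
      by (rule sum.cong[OF refl], rule sum.cong[OF refl], rule sum.swap)
    also have "\<dots> = (\<Sum>i\<in>J1. \<Sum>x\<in>X. \<Sum>j\<in>J2. \<Sum>y\<in>X. ?F x y i j)"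
      by (rule sum.swap)
    also have "\<dots> = (\<Sum>i\<in>J1. \<Sum>j\<in>J2. \<Sum>x\<in>X. \<Sum>y\<in>X. ?F x y i j)"
      by (rule sum.cong[OF refl], rule sum.swap)
    finally show ?thesis .
  qed
  also have "\<dots> = (\<Sum>i\<in>J1. \<Sum>j\<in>J2. (if mm (\<psi>1 i) (\<psi>2 j) = z then A (\<psi>1 i) (\<psi>2 j) * v1 i * v2 j else 0))"
  proof (intro sum.cong refl)
    fix i j assume ij: "i\<in>J1" "j\<in>J2"
    have "(\<Sum>x\<in>X. \<Sum>y\<in>X. if \<psi>1 i = x \<and> \<psi>2 j = y \<and> mm x y = z then A x y * v1 i * v2 j else 0)
        = (\<Sum>x\<in>X. if \<psi>1 i = x then (\<Sum>y\<in>X. if \<psi>2 j = y \<and> mm x y = z then A x y * v1 i * v2 j else 0) else 0)"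
      by (intro sum.cong refl) auto
    also have "\<dots> = (\<Sum>y\<in>X. if \<psi>2 j = y \<and> mm (\<psi>1 i) y = z then A (\<psi>1 i) y * v1 i * v2 j else 0)"
      using fin(1) ij im by (subst sum.delta') auto
    also have "\<dots> = (if mm (\<psi>1 i) (\<psi>2 j) = z then A (\<psi>1 i) (\<psi>2 j) * v1 i * v2 j else 0)"
      using sum_delta_conj[OF fin(1), of "\<psi>2 j" "\<lambda>y. mm (\<psi>1 i) y = z" "\<lambda>y. A (\<psi>1 i) y * v1 i * v2 j"] ij im by auto
    finally show "(\<Sum>x\<in>X. \<Sum>y\<in>X. if \<psi>1 i = x \<and> \<psi>2 j = y \<and> mm x y = z then A x y * v1 i * v2 j else 0) = (if mm (\<psi>1 i) (\<psi>2 j) = z then A (\<psi>1 i) (\<psi>2 j) * v1 i * v2 j else 0)" .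
  qed
  also have "\<dots> = lincomb (J1 \<times> J2) (\<lambda>(i,j). mm (\<psi>1 i) (\<psi>2 j)) (\<lambda>(i,j). A (\<psi>1 i) (\<psi>2 j) * v1 i * v2 j) z"
    unfolding lincomb_def by (simp add: sum.cartesian_product, intro sum.cong refl) auto
  finally show "tw_mult X mm A (lincomb J1 \<psi>1 v1) (lincomb J2 \<psi>2 v2) z = lincomb (J1 \<times> J2) (\<lambda>(i,j). mm (\<psi>1 i) (\<psi>2 j)) (\<lambda>(i,j). A (\<psi>1 i) (\<psi>2 j) * v1 i * v2 j) z" .
qed



lemma lincomb_nonzero: "lincomb J \<psi> v z \<noteq> 0 \<Longrightarrow> \<exists>j\<in>J. \<psi> j = z"
proof (rule ccontr)
  assume "lincomb J \<psi> v z \<noteq> 0" "\<not> (\<exists>j\<in>J. \<psi> j = z)"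
  moreover from this(2) have "lincomb J \<psi> v z = 0" unfolding lincomb_def by (intro sum.neutral) auto
  ultimately show False by simp
qed

lemma lincomb_reindex: "bij_betw f J' J \<Longrightarrow> lincomb J \<psi> v = lincomb J' (\<lambda>j. \<psi> (f j)) (\<lambda>j. v (f j))"
  unfolding lincomb_def by (rule ext) (simp add: sum.reindex_bij_betw[symmetric])

lemma lincomb_cong:
  "(\<And>j. j \<in> J \<Longrightarrow> \<psi> j = \<psi>' j) \<Longrightarrow> (\<And>j. j \<in> J \<Longrightarrow> v j = v' j) \<Longrightarrow> lincomb J \<psi> v = lincomb J \<psi>' v'"
  unfolding lincomb_def by (rule ext) (intro sum.cong refl, auto)

lemma lincomb_eq_sum: "lincomb J \<psi> v = (\<Sum>j\<in>J. smul (v j) (basis_elt (\<psi> j)))"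
  unfolding lincomb_def smul_def basis_elt_def by (rule ext) (auto simp: sum_fun_apply intro!: sum.cong)

lemma lincomb_carrier:
  assumes "finite X" "F \<in> alg_carrier X"
  shows "F = lincomb X (\<lambda>x. x) F"
proof
  fix z
  show "F z = lincomb X (\<lambda>x. x) F z"
    using assms unfolding alg_carrier_def lincomb_def by (cases "z \<in> X") (auto simp: sum.delta)
qed

lemma lincomb_smul: "lincomb J \<psi> (\<lambda>j. c * v j) = smul c (lincomb J \<psi> v)"
  unfolding lincomb_def smul_def by (rule ext) (auto simp: sum_distrib_left intro!: sum.cong)

lemma lincomb_add: "lincomb J \<psi> (\<lambda>j. v j + w j) = lincomb J \<psi> v + lincomb J \<psi> w"
  unfolding lincomb_def by (rule ext) (auto simp: sum.distrib[symmetric] intro!: sum.cong)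

lemma lincomb_sum: "lincomb J \<psi> (\<lambda>j. \<Sum>i\<in>I. f i j) = (\<Sum>i\<in>I. lincomb J \<psi> (f i))"
proof
  fix z
  have "lincomb J \<psi> (\<lambda>j. \<Sum>i\<in>I. f i j) z = (\<Sum>j\<in>J. \<Sum>i\<in>I. if \<psi> j = z then f i j else 0)"
    unfolding lincomb_def by (intro sum.cong refl) auto
  also have "\<dots> = (\<Sum>i\<in>I. \<Sum>j\<in>J. if \<psi> j = z then f i j else 0)" by (rule sum.swap)
  finally show "lincomb J \<psi> (\<lambda>j. \<Sum>i\<in>I. f i j) z = (\<Sum>i\<in>I. lincomb J \<psi> (f i)) z"
    unfolding lincomb_def sum_fun_apply .
qed

lemma lincomb_compose:
  fixes W :: "'b \<Rightarrow> 'r::comm_ring_1"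
  assumes fin: "finite X" "finite J" and im: "\<psi> ` J \<subseteq> X"
  shows "lincomb X \<phi> (\<lambda>g. lincomb J \<psi> v g * W g) = lincomb J (\<lambda>j. \<phi> (\<psi> j)) (\<lambda>j. v j * W (\<psi> j))"
proof (rule ext)
  fix z
  have "lincomb X \<phi> (\<lambda>g. lincomb J \<psi> v g * W g) z = (\<Sum>g\<in>X. \<Sum>j\<in>J. if \<psi> j = g \<and> \<phi> g = z then v j * W g else 0)"
    unfolding lincomb_def by (intro sum.cong refl) (auto simp: sum_distrib_right intro!: sum.cong)
  also have "\<dots> = (\<Sum>j\<in>J. \<Sum>g\<in>X. if \<psi> j = g \<and> \<phi> g = z then v j * W g else 0)"
    by (rule sum.swap)
  also have "\<dots> = (\<Sum>j\<in>J. if \<phi> (\<psi> j) = z then v j * W (\<psi> j) else 0)"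
  proof (intro sum.cong refl)
    fix j assume "j\<in>J"
    then show "(\<Sum>g\<in>X. if \<psi> j = g \<and> \<phi> g = z then v j * W g else 0) = (if \<phi> (\<psi> j) = z then v j * W (\<psi> j) else 0)"
      using sum_delta_conj[OF fin(1), of "\<psi> j" "\<lambda>g. \<phi> g = z" "\<lambda>g. v j * W g"] im by auto
  qed
  also have "\<dots> = lincomb J (\<lambda>j. \<phi> (\<psi> j)) (\<lambda>j. v j * W (\<psi> j)) z" unfolding lincomb_def ..
  finally show "lincomb X \<phi> (\<lambda>g. lincomb J \<psi> v g * W g) z = lincomb J (\<lambda>j. \<phi> (\<psi> j)) (\<lambda>j. v j * W (\<psi> j)) z" .
qed

lemma lincomb_apply_inj:
  assumes "finite X" "inj_on \<phi> X" "a \<in> X"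
  shows "lincomb X \<phi> w (\<phi> a) = w a"
proof -
  have "lincomb X \<phi> w (\<phi> a) = (\<Sum>g\<in>X. if g = a then w g else 0)"
    unfolding lincomb_def using assms by (intro sum.cong refl) (auto dest: inj_onD)
  also have "\<dots> = w a" using assms by simp
  finally show ?thesis .
qed

lemma tw_mult_zero_left: "tw_mult X mm A 0 F = 0"
  unfolding tw_mult_def by (rule ext) (simp only: zero_fun_apply mult_zero_right mult_zero_left if_cancel sum.neutral_const)

lemma tw_mult_zero_right: "tw_mult X mm A F 0 = 0"
  unfolding tw_mult_def by (rule ext) (simp only: zero_fun_apply mult_zero_right mult_zero_left if_cancel sum.neutral_const)

lemma tw_mult_closed:
  assumes "\<And>x y. x \<in> X \<Longrightarrow> y \<in> X \<Longrightarrow> mm x y \<in> X"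
  shows "tw_mult X mm A F G \<in> alg_carrier X"
  unfolding alg_carrier_def tw_mult_def
proof (intro CollectI allI impI)
  fix z assume "z \<notin> X"
  then show "(\<Sum>x\<in>X. \<Sum>y\<in>X. if mm x y = z then A x y * F x * G y else 0) = 0"
    using assms by (intro sum.neutral ballI) auto
qed

lemma tw_mult_middle_basis:
  fixes A :: "'b \<Rightarrow> 'b \<Rightarrow> 'r::comm_ring_1"
  assumes X: "finite X" "\<And>x y. x \<in> X \<Longrightarrow> y \<in> X \<Longrightarrow> mm x y \<in> X" and p: "p \<in> X"
    and F: "F \<in> alg_carrier X" "F' \<in> alg_carrier X"
  shows "tw_mult X mm A (tw_mult X mm A F (lincomb {p} (\<lambda>_. p) (\<lambda>_. c))) F'
    = lincomb (X \<times> X) (\<lambda>(g, h). mm (mm g p) h) (\<lambda>(g, h). A (mm g p) h * (A g p * F g * c) * F' h)"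
proof -
  have FF: "F = lincomb X (\<lambda>x. x) F" "F' = lincomb X (\<lambda>x. x) F'"
    using lincomb_carrier[OF X(1)] F by blast+
  have "tw_mult X mm A (lincomb X (\<lambda>x. x) F) (lincomb {p} (\<lambda>_. p) (\<lambda>_. c))
      = lincomb (X \<times> {p}) (\<lambda>(g, _). mm g p) (\<lambda>(g, _). A g p * F g * c)"
    using p by (subst tw_mult_lincomb[OF X(1) X(1)]) auto
  moreover have "tw_mult X mm A (lincomb (X \<times> {p}) (\<lambda>(g, _). mm g p) (\<lambda>(g, _). A g p * F g * c))
      (lincomb X (\<lambda>x. x) F')
    = lincomb ((X \<times> {p}) \<times> X) (\<lambda>(gp, h). mm (mm (fst gp) p) h)
          (\<lambda>(gp, h). A (mm (fst gp) p) h * (A (fst gp) p * F (fst gp) * c) * F' h)"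
    using X p by (subst tw_mult_lincomb[OF X(1) _ X(1)]) (auto intro!: lincomb_cong)
  ultimately have "tw_mult X mm A (tw_mult X mm A F (lincomb {p} (\<lambda>_. p) (\<lambda>_. c))) F'
      = lincomb ((X \<times> {p}) \<times> X) (\<lambda>(gp, h). mm (mm (fst gp) p) h)
          (\<lambda>(gp, h). A (mm (fst gp) p) h * (A (fst gp) p * F (fst gp) * c) * F' h)"
    using FF by simp
  also have "\<dots> = lincomb (X \<times> X) (\<lambda>(g, h). mm (mm g p) h) (\<lambda>(g, h). A (mm g p) h * (A g p * F g * c) * F' h)"
  proof (rule trans[OF lincomb_reindex])
    show "bij_betw (\<lambda>(g, h). ((g, p), h)) (X \<times> X) ((X \<times> {p}) \<times> X)"
      by (rule bij_betw_byWitness[where f'="\<lambda>(gp, h). (fst gp, h)"]) auto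
  qed (auto intro: lincomb_cong)
  finally show ?thesis .
qed

lemma unit_mult_right_cancel':
  fixes w :: "'r::comm_ring_1"
  assumes "w dvd 1" "x * w = y * w"
  shows "x = y"
proof -
  obtain w' where "1 = w * w'" using assms(1) unfolding dvd_def by blast
  then have "x = x * w * w'" "y = y * w * w'" by (simp_all add: mult.assoc)
  then show ?thesis using assms(2) by simp
qed

lemma cell_span_zero: "finite I \<Longrightarrow> 0 \<in> cell_span I v"
  unfolding cell_span_def by (rule CollectI, rule exI[of _ "\<lambda>_. 0"]) (auto simp: smul_def zero_fun_def)

lemma cell_span_add: "f \<in> cell_span I v \<Longrightarrow> g \<in> cell_span I v \<Longrightarrow> f + g \<in> cell_span I v"
proof -
  assume "f \<in> cell_span I v" "g \<in> cell_span I v"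
  then obtain c d where "f = (\<Sum>i\<in>I. smul (c i) (v i))" "g = (\<Sum>i\<in>I. smul (d i) (v i))"
    unfolding cell_span_def by blast
  then have "f + g = (\<Sum>i\<in>I. smul (c i + d i) (v i))"
    by (auto simp: sum_fun_apply smul_def distrib_right sum.distrib)
  then show ?thesis unfolding cell_span_def by (intro CollectI exI[of _ "\<lambda>i. c i + d i"])
qed

lemma cell_span_smul: "f \<in> cell_span I v \<Longrightarrow> smul a f \<in> cell_span I v"
proof -
  assume "f \<in> cell_span I v"
  then obtain c where "f = (\<Sum>i\<in>I. smul (c i) (v i))" unfolding cell_span_def by blast
  then have "smul a f = (\<Sum>i\<in>I. smul (a * c i) (v i))"
    by (auto simp: smul_def sum_fun_apply sum_distrib_left mult.assoc)
  then show ?thesis unfolding cell_span_def by (intro CollectI exI[of _ "\<lambda>i. a * c i"])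
qed

lemma cell_span_sum:
  assumes "finite I" "\<And>a. a \<in> A \<Longrightarrow> f a \<in> cell_span I v"
  shows "(\<Sum>a\<in>A. f a) \<in> cell_span I v"
proof (cases "finite A")
  case True
  then show ?thesis using assms
    by (induction A rule: finite_induct) (auto intro: cell_span_zero cell_span_add)
qed (simp add: cell_span_zero[OF assms(1)])

lemma cell_span_generator:
  assumes "finite I" "i \<in> I"
  shows "v i \<in> cell_span I v"
proof -
  have "v i = (\<Sum>j\<in>I. smul (if j = i then 1 else 0) (v j))"
  proof
    fix x
    have "(\<Sum>j\<in>I. smul (if j = i then 1 else 0) (v j)) x = (\<Sum>j\<in>I. if j = i then v j x else 0)"
      unfolding sum_fun_apply smul_def by (intro sum.cong refl) auto
    then show "v i x = (\<Sum>j\<in>I. smul (if j = i then 1 else 0) (v j)) x" using assms by simp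
  qed
  then show ?thesis unfolding cell_span_def by (intro CollectI exI[of _ "\<lambda>j. if j = i then 1 else 0"])
qed

lemma cellular_finite: "cellular B mul st Lam le M C \<Longrightarrow> finite Lam \<and> (\<forall>l\<in>Lam. finite (M l))"
  unfolding cellular_def by (elim conjE) (intro conjI)

lemma cellular_spans:
  "cellular B mul st Lam le M C \<Longrightarrow> alg_carrier B \<subseteq> cell_span (cell_idx Lam M) (\<lambda>(lam, s, t). C lam s t)"
  unfolding cellular_def by (elim conjE)

lemma cellular_basis_in_carrier:
  "cellular B mul st Lam le M C \<Longrightarrow> l \<in> Lam \<Longrightarrow> s \<in> M l \<Longrightarrow> t \<in> M l \<Longrightarrow> C l s t \<in> alg_carrier B"
  unfolding cellular_def cell_idx_def by (elim conjE) blast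

definition lower_idx :: "'l set \<Rightarrow> ('l \<Rightarrow> 'l \<Rightarrow> bool) \<Rightarrow> ('l \<Rightarrow> 'm set) \<Rightarrow> 'l \<Rightarrow> ('l \<times> 'm \<times> 'm) set" where
  "lower_idx Lam le M lam = {(mu, u, w). mu \<in> Lam \<and> le mu lam \<and> mu \<noteq> lam \<and> u \<in> M mu \<and> w \<in> M mu}"

lemma lower_ideal_eq_span:
  "lower_ideal Lam le M C lam = cell_span (lower_idx Lam le M lam) (\<lambda>(mu, u, w). C mu u w)"
  unfolding lower_ideal_def lower_idx_def ..

section \<open>Transporting \<open>R\<^sup>\<beta>[G\<^sub>D]\<close> into \<open>R\<^sup>\<alpha>[S]\<close>\<close>

locale twisted_cellular_setting = finite_involuted_semigroup S m st
  for S :: "'s set" and m and st +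
  fixes al :: "'s \<Rightarrow> 's \<Rightarrow> 'r::comm_ring_1"
    and one :: "'s set \<Rightarrow> 's"
    and be :: "'s set \<Rightarrow> 's \<Rightarrow> 's \<Rightarrow> 'r"
    and LamD :: "'s set \<Rightarrow> 'l set" and leD :: "'s set \<Rightarrow> 'l \<Rightarrow> 'l \<Rightarrow> bool"
    and MD :: "'s set \<Rightarrow> 'l \<Rightarrow> 'm set"
    and CD :: "'s set \<Rightarrow> 'l \<Rightarrow> 'm \<Rightarrow> 'm \<Rightarrow> ('s \<Rightarrow> 'r)"
    and u :: "'s set \<Rightarrow> 's"
  assumes al_sym: "\<forall>x\<in>S. \<forall>y\<in>S. al x y = al (st y) (st x)"
    and one_D: "\<forall>D\<in>Dclasses S m. one D \<in> D \<and> m (one D) (one D) = one D \<and> st (one D) = one D"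
    and be_unit: "\<forall>D\<in>Dclasses S m. \<forall>x y. inLL S m st one D x y \<longrightarrow> be D x y dvd 1"
    and be_cocycle: "\<forall>D\<in>Dclasses S m. \<forall>x\<in>S. \<forall>y\<in>S. \<forall>z\<in>S.
        inLL S m st one D x y \<and> inLL S m st one D (m x y) z \<and>
        inLL S m st one D x (m y z) \<and> inLL S m st one D y z \<longrightarrow>
        be D x y * be D (m x y) z = be D x (m y z) * be D y z"
    and be_al: "\<forall>D\<in>Dclasses S m. \<forall>x\<in>S. \<forall>y\<in>S. \<forall>z\<in>S.
        inLL S m st one D (m x y) z \<and> inLL S m st one D y z \<longrightarrow>
        al x y * be D (m x y) z = al x (m y z) * be D y z"
    and be_sym: "\<forall>D\<in>Dclasses S m. \<forall>x\<in>S. \<forall>y\<in>S.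
        inLL S m st one D x y \<and> inLL S m st one D (st y) (st x) \<longrightarrow>
        be D x y = be D (st y) (st x)"
    and cell_G: "\<forall>D\<in>Dclasses S m.
        cellular (GD S m st one D) (tw_mult (GD S m st one D) m (be D)) (alg_star st)
                 (LamD D) (leD D) (MD D) (CD D)"
    and u_L: "\<forall>D\<in>Dclasses S m. \<forall>L\<in>Lclasses_in S m D. u L \<in> L \<and> Rrel S m (u L) (one D)"
begin

abbreviation G :: "'s set \<Rightarrow> 's set" where
  "G D \<equiv> GD S m st one D"

lemma one_props:
  assumes "D \<in> Dclasses S m"
  shows "one D \<in> D" "one D \<in> S" "m (one D) (one D) = one D" "st (one D) = one D"
    "D = Dclass S m (one D)"
proof -
  show e: "one D \<in> D" "m (one D) (one D) = one D" "st (one D) = one D"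
    using one_D assms by auto
  then show "one D \<in> S" "D = Dclass S m (one D)"
    using Dclasses_subset[OF assms] Dclasses_eq_Dclass[OF assms] by auto
qed

lemma G_iff_inH: "D \<in> Dclasses S m \<Longrightarrow> g \<in> G D \<longleftrightarrow> inH (one D) g"
  unfolding GD_def LD_def inH_def
  using Lclass_iff_inL[of "one D" g] st_Lclass_iff_inR[of "one D" g] one_props[of D] by blast

lemma inLL_iff: "D \<in> Dclasses S m \<Longrightarrow> inLL S m st one D x y \<longleftrightarrow> inL (one D) x \<and> inR (one D) y"
  unfolding inLL_def LD_def
  using Lclass_iff_inL[of "one D" x] st_Lclass_iff_inR[of "one D" y] one_props[of D] by blast

lemma G_subset: "D \<in> Dclasses S m \<Longrightarrow> G D \<subseteq> S"
  using G_iff_inH inH_in_carrier by blast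

lemma finite_G: "D \<in> Dclasses S m \<Longrightarrow> finite (G D)"
  using G_subset finite_carrier finite_subset by blast

lemma G_mult_closed: "D \<in> Dclasses S m \<Longrightarrow> g \<in> G D \<Longrightarrow> h \<in> G D \<Longrightarrow> m g h \<in> G D"
  using G_iff_inH inH_mult one_props(2) by blast

lemma cellular_G:
  "D \<in> Dclasses S m \<Longrightarrow> cellular (G D) (tw_mult (G D) m (be D)) (alg_star st) (LamD D) (leD D) (MD D) (CD D)"
  using cell_G by blast

lemma u_props:
  assumes D: "D \<in> Dclasses S m" and L: "L \<in> Lclasses_in S m D"
  shows "u L \<in> S" "inR (one D) (u L)" "inL (one D) (st (u L))" "Lclass S m (u L) = L"
proof -
  have u: "u L \<in> L" "Rrel S m (u L) (one D)" using u_L D L by blast+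
  obtain x where x: "x \<in> D" "L = Lclass S m x" using L unfolding Lclasses_in_def by blast
  then show uS: "u L \<in> S" using u unfolding Lclass_def by blast
  show uR: "inR (one D) (u L)" using inR_iff_Rrel one_props[OF D] uS u by blast
  show "inL (one D) (st (u L))" using inL_st_of_inR[OF uR] one_props[OF D] by blast
  show "Lclass S m (u L) = L" using Lclass_eq_of_mem u x Dclasses_subset[OF D] by blast
qed

definition sandwich :: "'s set \<Rightarrow> 's set \<Rightarrow> 's \<Rightarrow> 's" where
  "sandwich L K g = m (m (st (u L)) g) (u K)"

definition sandwich_coeff :: "'s set \<Rightarrow> 's set \<Rightarrow> 's set \<Rightarrow> 's \<Rightarrow> 'r" where
  "sandwich_coeff D L K g = be D (st (u L)) g * be D (m (st (u L)) g) (u K)"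

definition transfer :: "'s set \<Rightarrow> 's set \<Rightarrow> 's set \<Rightarrow> ('s \<Rightarrow> 'r) \<Rightarrow> 's \<Rightarrow> 'r" where
  "transfer D L K F = lincomb (G D) (sandwich L K) (\<lambda>g. F g * sandwich_coeff D L K g)"

lemma bigC_eq_transfer:
  "bigC S m st one be CD u p Ls Kt = transfer (fst p) (fst Ls) (fst Kt) (CD (fst p) (snd p) (snd Ls) (snd Kt))"
  unfolding bigC_def transfer_def lincomb_def sandwich_def sandwich_coeff_def
  by (intro ext sum.cong refl) (simp add: mult.assoc)

lemma sandwich_props:
  assumes D: "D \<in> Dclasses S m" and L: "L \<in> Lclasses_in S m D" and K: "K \<in> Lclasses_in S m D"
    and g: "g \<in> G D"
  shows "sandwich L K g \<in> S" "sandwich L K g \<in> D" "Lclass S m (sandwich L K g) = K"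
    "Lclass S m (st (sandwich L K g)) = L"
proof -
  note o = one_props[OF D] and uL = u_props[OF D L] and uK = u_props[OF D K]
  note G = sandwich_Green[OF o(2) uL(3) G_iff_inH[OF D, THEN iffD1, OF g] uK(2)]
  show zS: "sandwich L K g \<in> S" using G(1) unfolding sandwich_def .
  show "sandwich L K g \<in> D" using G(1,4) o(5) unfolding sandwich_def Dclass_def by blast
  show "Lclass S m (sandwich L K g) = K"
    using Lclass_eq[OF G(1) uK(1) G(2)] uK(4) unfolding sandwich_def by simp
  have "Lrel S m (st (sandwich L K g)) (u L)"
    using Lrel_st_iff_Rrel[of _ "st (u L)"] G(1,3) uL(1) unfolding sandwich_def by simp
  then show "Lclass S m (st (sandwich L K g)) = L" using Lclass_eq uL(1,4) zS by auto
qed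

lemma inj_on_sandwich:
  assumes D: "D \<in> Dclasses S m" and L: "L \<in> Lclasses_in S m D" and K: "K \<in> Lclasses_in S m D"
  shows "inj_on (sandwich L K) (G D)"
  using inH_sandwich_inj[OF u_props(3)[OF D L] u_props(2)[OF D K]] G_iff_inH[OF D] one_props(2)[OF D]
  unfolding inj_on_def sandwich_def by blast

lemma sandwich_coeff_unit:
  assumes D: "D \<in> Dclasses S m" and L: "L \<in> Lclasses_in S m D" and K: "K \<in> Lclasses_in S m D"
    and g: "g \<in> G D"
  shows "sandwich_coeff D L K g dvd 1"
proof -
  have gH: "inL (one D) g" "inR (one D) g" using G_iff_inH[OF D] g unfolding inH_def by auto
  have "inL (one D) (m (st (u L)) g)" using inL_mult[OF u_props(3)[OF D L] gH] one_props[OF D] by blast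
  then have "inLL S m st one D (st (u L)) g" "inLL S m st one D (m (st (u L)) g) (u K)"
    unfolding inLL_iff[OF D] using u_props(2,3)[OF D L] u_props(2)[OF D K] gH by blast+
  then have "be D (st (u L)) g dvd 1" "be D (m (st (u L)) g) (u K) dvd 1"
    using be_unit D by blast+
  then show ?thesis
    unfolding sandwich_coeff_def
    using mult_dvd_mono[of "be D (st (u L)) g" 1 "be D (m (st (u L)) g) (u K)" 1] by simp
qed

lemma transfer_apply_sandwich:
  assumes "D \<in> Dclasses S m" "L \<in> Lclasses_in S m D" "K \<in> Lclasses_in S m D" "g \<in> G D"
  shows "transfer D L K F (sandwich L K g) = F g * sandwich_coeff D L K g"
  unfolding transfer_def by (rule lincomb_apply_inj[OF finite_G[OF assms(1)] inj_on_sandwich[OF assms(1-3)] assms(4)])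

lemma transfer_smul_add: "transfer D L K (smul r F + F') = smul r (transfer D L K F) + transfer D L K F'"
proof -
  have "transfer D L K (smul r F + F')
      = lincomb (G D) (sandwich L K) (\<lambda>x. r * (F x * sandwich_coeff D L K x) + F' x * sandwich_coeff D L K x)"
    unfolding transfer_def smul_def by (simp add: algebra_simps)
  then show ?thesis unfolding lincomb_add lincomb_smul transfer_def .
qed

lemma transfer_sum: "transfer D L K (\<Sum>i\<in>I. smul (c i) (F i)) = (\<Sum>i\<in>I. smul (c i) (transfer D L K (F i)))"
proof -
  have "transfer D L K (\<Sum>i\<in>I. smul (c i) (F i))
      = lincomb (G D) (sandwich L K) (\<lambda>x. \<Sum>i\<in>I. c i * (F i x * sandwich_coeff D L K x))"
    unfolding transfer_def smul_def sum_fun_apply by (simp add: sum_distrib_right mult.assoc)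
  then show ?thesis unfolding lincomb_sum lincomb_smul transfer_def .
qed

lemma sandwich_surjective_on_Dclass:
  assumes D: "D \<in> Dclasses S m" and y: "y \<in> D"
  shows "\<exists>L\<in>Lclasses_in S m D. \<exists>K\<in>Lclasses_in S m D. \<exists>g\<in>G D. y = sandwich L K g"
proof -
  note o = one_props[OF D]
  have yS: "y \<in> S" using y Dclasses_subset D by blast
  have "Drel S m (one D) y" using y o(5) unfolding Dclass_def by blast
  then have "st y \<in> D" using Drel_st o(4,5) yS unfolding Dclass_def by fastforce
  define L where "L = Lclass S m (st y)"
  define K where "K = Lclass S m y"
  have L: "L \<in> Lclasses_in S m D" and K: "K \<in> Lclasses_in S m D"
    unfolding L_def K_def Lclasses_in_def using y \<open>st y \<in> D\<close> by blast+
  have "u L \<in> L" "u K \<in> K" using u_L D L K by blast+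
  then have r1: "Lrel S m (st y) (u L)" and r2: "Lrel S m y (u K)"
    unfolding L_def K_def Lclass_def by auto
  have "Rrel S m y (st (u L))" using Rrel_st_iff_Lrel[of "st y" "u L"] r1 yS u_props(1)[OF D L] by simp
  then obtain g where "inH (one D) g" "y = m (m (st (u L)) g) (u K)"
    using sandwich_decomposition[OF o(2,3) u_props(3)[OF D L] u_props(2)[OF D K] yS _ r2] by blast
  then show ?thesis using L K G_iff_inH[OF D] unfolding sandwich_def by blast
qed

section \<open>Cocycle identities on \<open>L\<^sub>D \<times> L\<^sub>D\<^sup>*\<close>\<close>

lemma be_cocycle_at:
  assumes D: "D \<in> Dclasses S m" and x: "inL (one D) x" and y: "inH (one D) y" and z: "inR (one D) z"
  shows "be D x y * be D (m x y) z = be D x (m y z) * be D y z"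
proof -
  have S: "x \<in> S" "y \<in> S" "z \<in> S" using x y z unfolding inH_def inL_def inR_def by auto
  have "inL (one D) (m x y)" "inR (one D) (m y z)"
    using inL_mult[OF x] inR_mult[OF _ _ z] y one_props(2)[OF D] unfolding inH_def by blast+
  then show ?thesis
    using x y z unfolding inH_def
    by (intro be_cocycle[rule_format, OF D S]) (simp add: inLL_iff[OF D])
qed

lemma al_be_at:
  assumes D: "D \<in> Dclasses S m" and "x \<in> S" "inL (one D) y" "inL (one D) (m x y)" "inR (one D) z"
  shows "al x y * be D (m x y) z = al x (m y z) * be D y z"
proof -
  have "y \<in> S" "z \<in> S" using assms(3,5) unfolding inL_def inR_def by auto
  then show ?thesis
    using assms(3-5) by (intro be_al[rule_format, OF D assms(2)]) (simp_all add: inLL_iff[OF D])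
qed

text \<open>The mirror image of the compatibility of \<open>\<alpha>\<close> and \<open>\<beta>\<^sub>D\<close>, obtained by applying \<open>*\<close>.\<close>

lemma be_al_at:
  assumes D: "D \<in> Dclasses S m" and z: "z \<in> S"
    and x: "inL (one D) x" and y: "inR (one D) y" and yz: "inR (one D) (m y z)"
  shows "be D x y * al (m x y) z = be D x (m y z) * al y z"
proof -
  note o = one_props[OF D]
  have S: "x \<in> S" "y \<in> S" using x y unfolding inL_def inR_def by auto
  have szy: "m (st z) (st y) = st (m y z)" using st_mult S z by simp
  have LL: "inLL S m st one D x y" "inLL S m st one D x (m y z)"
      "inLL S m st one D (st (m y z)) (st x)" "inLL S m st one D (st y) (st x)"
    unfolding inLL_iff[OF D]
    using x y yz inL_st_of_inR[OF yz o(2,4)] inL_st_of_inR[OF y o(2,4)] inR_st_of_inL[OF x o(2,4)]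
    by blast+
  have "al (st z) (st y) * be D (st (m y z)) (st x) = al (st z) (m (st y) (st x)) * be D (st y) (st x)"
    using be_al[rule_format, OF D, of "st z" "st y" "st x"] LL(3,4) S z szy by simp
  moreover have "al (st z) (st y) = al y z"
    using al_sym[rule_format, of y z] S z by simp
  moreover have "al (st z) (m (st y) (st x)) = al (m x y) z"
    using al_sym[rule_format, of "m x y" z] S z st_mult[of x y] by simp
  moreover have "be D x (m y z) = be D (st (m y z)) (st x)"
    using be_sym[rule_format, OF D, of x "m y z"] LL(2,3) S z by simp
  moreover have "be D x y = be D (st y) (st x)"
    using be_sym[rule_format, OF D, of x y] LL(1,4) S by simp
  ultimately show ?thesis by (simp add: mult.commute)
qed

lemma cocycle_rebracket:
  assumes D: "D \<in> Dclasses S m" and a: "inL (one D) a" and b: "inR (one D) b"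
    and g: "inH (one D) g" and p: "inH (one D) p" and h: "inH (one D) h"
  shows "be D a g * be D (m a g) (m (m p h) b) * be D (m p h) b * be D p h
    = be D g p * be D (m g p) h * be D a (m (m g p) h) * be D (m a (m (m g p) h)) b"
proof -
  define e where "e = one D"
  have eS: "e \<in> S" unfolding e_def using one_props[OF D] by simp
  have S: "a \<in> S" "b \<in> S" "g \<in> S" "p \<in> S" "h \<in> S"
    using a b g p h unfolding inH_def inL_def inR_def by auto
  have H: "inH e (m p h)" "inH e (m g p)" "inH e (m (m g p) h)"
    using inH_mult g p h eS unfolding e_def by blast+
  have R: "inR e (m (m p h) b)"
    using inR_mult[OF _ _ b[folded e_def] eS] H(1) unfolding inH_def by blast
  have gph: "m g (m p h) = m (m g p) h" and gphb: "m g (m (m p h) b) = m (m (m g p) h) b"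
    using S by (simp_all add: assoc)
  have ag: "be D a g * be D (m a g) (m (m p h) b) = be D a (m (m (m g p) h) b) * be D g (m (m p h) b)"
    using be_cocycle_at[OF D a g R[unfolded e_def]] unfolding gphb .
  have gph_b: "be D g (m p h) * be D (m (m g p) h) b = be D g (m (m p h) b) * be D (m p h) b"
    using be_cocycle_at[OF D _ H(1)[unfolded e_def] b, of g] g unfolding inH_def gph by blast
  have gp_h: "be D g p * be D (m g p) h = be D g (m p h) * be D p h"
    using be_cocycle_at[OF D _ p _] g h unfolding inH_def by blast
  have a_gph: "be D a (m (m g p) h) * be D (m a (m (m g p) h)) b
      = be D a (m (m (m g p) h) b) * be D (m (m g p) h) b"
    using be_cocycle_at[OF D a H(3)[unfolded e_def] b] S by (simp add: assoc)
  have "be D a g * be D (m a g) (m (m p h) b) * be D (m p h) b * be D p h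
      = be D a (m (m (m g p) h) b) * (be D g (m (m p h) b) * be D (m p h) b) * be D p h"
    unfolding ag by (simp only: mult.assoc)
  also have "\<dots> = (be D g (m p h) * be D p h) * (be D a (m (m (m g p) h) b) * be D (m (m g p) h) b)"
    unfolding gph_b[symmetric] by (simp only: mult_ac)
  finally show ?thesis unfolding gp_h[symmetric] a_gph[symmetric] by (simp only: mult_ac)
qed

lemma twist_absorption:
  assumes D: "D \<in> Dclasses S m" and a: "inL (one D) a" and x: "inR (one D) x"
    and y: "inL (one D) y" and b: "inR (one D) b"
    and g: "inH (one D) g" and p: "inH (one D) (m x y)" and h: "inH (one D) h"
  shows "al (m (m a g) x) (m (m y h) b) * be D (m a g) x * be D y h * be D (m y h) b
    = al x y * be D (m a g) (m (m (m x y) h) b) * be D (m (m x y) h) b * be D (m x y) h"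
proof -
  define e where "e = one D"
  have eS: "e \<in> S" unfolding e_def using one_props[OF D] by simp
  have S: "a \<in> S" "x \<in> S" "y \<in> S" "b \<in> S" "g \<in> S" "h \<in> S"
    using a x y b g h unfolding inH_def inL_def inR_def by auto
  have ag: "inL e (m a g)" using inL_mult[OF a[folded e_def] _ _ eS] g unfolding inH_def e_def by blast
  have yh: "inL e (m y h)" using inL_mult[OF y[folded e_def] _ _ eS] h unfolding inH_def e_def by blast
  have ph: "inH e (m (m x y) h)" using inH_mult p h eS unfolding e_def by blast
  have phb: "inR e (m (m (m x y) h) b)"
    using inR_mult[OF _ _ b[folded e_def] eS] ph unfolding inH_def by blast
  have xyhb: "m x (m (m y h) b) = m (m (m x y) h) b" and xyh: "m x (m y h) = m (m x y) h"
    using S by (simp_all add: assoc)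
  have ag_x: "be D (m a g) x * al (m (m a g) x) (m (m y h) b)
      = be D (m a g) (m (m (m x y) h) b) * al x (m (m y h) b)"
    using be_al_at[OF D _ ag[unfolded e_def] x phb[folded xyhb, unfolded e_def]] S
    unfolding xyhb by simp
  have x_yh: "al x (m y h) * be D (m (m x y) h) b = al x (m (m y h) b) * be D (m y h) b"
  proof -
    have "inL (one D) (m x (m y h))" using ph unfolding xyh inH_def e_def by blast
    from al_be_at[OF D S(2) yh[unfolded e_def] this b] show ?thesis unfolding xyh .
  qed
  have x_y: "al x y * be D (m x y) h = al x (m y h) * be D y h"
    using al_be_at[OF D _ y _ _] p h S unfolding inH_def by simp
  have "al (m (m a g) x) (m (m y h) b) * be D (m a g) x * be D y h * be D (m y h) b
      = be D (m a g) (m (m (m x y) h) b) * (al x (m (m y h) b) * be D (m y h) b) * be D y h"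
    using ag_x by (simp only: mult_ac)
  also have "\<dots> = be D (m a g) (m (m (m x y) h) b) * be D (m (m x y) h) b * (al x (m y h) * be D y h)"
    unfolding x_yh[symmetric] by (simp only: mult_ac)
  finally show ?thesis unfolding x_y[symmetric] by (simp only: mult_ac)
qed

text \<open>The coefficient of \<open>u\<^sub>L\<^sub>'\<^sup>* g u\<^sub>L \<cdot> u\<^sub>K\<^sup>* h u\<^sub>K\<^sub>'\<close> in \<open>R\<^sup>\<alpha>[S]\<close> equals the one of
  \<open>g (u\<^sub>L u\<^sub>K\<^sup>*) h\<close> in \<open>R\<^sup>\<beta>[G\<^sub>D]\<close>, transported by \<open>transfer D L' K'\<close>.\<close>

lemma sandwich_coeff_product:
  assumes D: "D \<in> Dclasses S m" and a: "inL (one D) a" and x: "inR (one D) x"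
    and y: "inL (one D) y" and b: "inR (one D) b"
    and p: "inH (one D) (m x y)" and g: "inH (one D) g" and h: "inH (one D) h"
  shows "al (m (m a g) x) (m (m y h) b) * (be D a g * be D (m a g) x) * (be D y h * be D (m y h) b)
   = al x y * be D g (m x y) * be D (m g (m x y)) h
     * (be D a (m (m g (m x y)) h) * be D (m a (m (m g (m x y)) h)) b)"
proof -
  have "al (m (m a g) x) (m (m y h) b) * (be D a g * be D (m a g) x) * (be D y h * be D (m y h) b)
    = be D a g * (al (m (m a g) x) (m (m y h) b) * be D (m a g) x * be D y h * be D (m y h) b)"
    by (simp only: mult_ac)
  also have "\<dots> = al x y * (be D a g * be D (m a g) (m (m (m x y) h) b) * be D (m (m x y) h) b
      * be D (m x y) h)"
    unfolding twist_absorption[OF D a x y b g p h] by (simp only: mult_ac)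
  also have "\<dots> = al x y * (be D g (m x y) * be D (m g (m x y)) h * be D a (m (m g (m x y)) h)
      * be D (m a (m (m g (m x y)) h)) b)"
    unfolding cocycle_rebracket[OF D a b g p h] ..
  finally show ?thesis by (simp only: mult_ac)
qed

section \<open>The product of two transported elements\<close>

lemma transfer_mult_transfer:
  assumes D: "D \<in> Dclasses S m" and L: "L1 \<in> Lclasses_in S m D" "L \<in> Lclasses_in S m D"
    and K: "K \<in> Lclasses_in S m D" "K1 \<in> Lclasses_in S m D"
  shows "tw_mult S m al (transfer D L1 L F1) (transfer D K K1 F2)
    = lincomb (G D \<times> G D) (\<lambda>(g, h). m (sandwich L1 L g) (sandwich K K1 h))
        (\<lambda>(g, h). al (sandwich L1 L g) (sandwich K K1 h)
           * (F1 g * sandwich_coeff D L1 L g) * (F2 h * sandwich_coeff D K K1 h))"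
  unfolding transfer_def
  by (rule tw_mult_lincomb[OF finite_carrier finite_G[OF D] finite_G[OF D]])
    (use sandwich_props(1)[OF D L] sandwich_props(1)[OF D K] in auto)


lemma twP_eq:
  "twP S m st one al u D L K = (if m (u L) (st (u K)) \<in> G D
     then lincomb {m (u L) (st (u K))} (\<lambda>_. m (u L) (st (u K))) (\<lambda>_. al (u L) (st (u K))) else 0)"
  unfolding twP_def lincomb_def smul_def basis_elt_def by (rule ext) auto

lemma transfer_product_in_G:
  assumes D: "D \<in> Dclasses S m" and L: "L1 \<in> Lclasses_in S m D" "L \<in> Lclasses_in S m D"
    and K: "K \<in> Lclasses_in S m D" "K1 \<in> Lclasses_in S m D"
    and F: "F1 \<in> alg_carrier (G D)" "F2 \<in> alg_carrier (G D)"
    and p: "m (u L) (st (u K)) \<in> G D"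
  shows "lincomb (G D \<times> G D) (\<lambda>(g, h). m (sandwich L1 L g) (sandwich K K1 h))
        (\<lambda>(g, h). al (sandwich L1 L g) (sandwich K K1 h)
           * (F1 g * sandwich_coeff D L1 L g) * (F2 h * sandwich_coeff D K K1 h))
    = transfer D L1 K1 (tw_mult (G D) m (be D) (tw_mult (G D) m (be D) F1 (twP S m st one al u D L K)) F2)"
proof -
  define x y where "x = u L" and "y = st (u K)"
  have x: "inR (one D) x" and y: "inL (one D) y" and S: "x \<in> S" "y \<in> S"
    unfolding x_def y_def using u_props[OF D L(2)] u_props[OF D K(1)] by auto
  have a: "inL (one D) (st (u L1))" and b: "inR (one D) (u K1)" and ab: "st (u L1) \<in> S" "u K1 \<in> S"
    using u_props[OF D L(1)] u_props[OF D K(2)] by auto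
  have GS: "g \<in> G D \<Longrightarrow> g \<in> S" for g using G_subset[OF D] by blast
  have pH: "inH (one D) (m x y)" using p G_iff_inH[OF D] unfolding x_def y_def by blast
  have "transfer D L1 K1 (tw_mult (G D) m (be D) (tw_mult (G D) m (be D) F1 (twP S m st one al u D L K)) F2)
    = transfer D L1 K1 (lincomb (G D \<times> G D) (\<lambda>(g, h). m (m g (m x y)) h)
        (\<lambda>(g, h). be D (m g (m x y)) h * (be D g (m x y) * F1 g * al x y) * F2 h))"
    unfolding twP_eq using p x_def y_def
    by (simp add: tw_mult_middle_basis[OF finite_G[OF D] G_mult_closed[OF D] p F])
  also have "\<dots> = lincomb (G D \<times> G D) (\<lambda>(g, h). sandwich L1 K1 (m (m g (m x y)) h))
      (\<lambda>(g, h). be D (m g (m x y)) h * (be D g (m x y) * F1 g * al x y) * F2 h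
         * sandwich_coeff D L1 K1 (m (m g (m x y)) h))"
    unfolding transfer_def
    by (subst lincomb_compose[OF finite_G[OF D]]) (auto simp: p[folded x_def y_def] G_mult_closed[OF D] finite_G[OF D]
        intro!: lincomb_cong)
  also have "\<dots> = lincomb (G D \<times> G D) (\<lambda>(g, h). m (sandwich L1 L g) (sandwich K K1 h))
        (\<lambda>(g, h). al (sandwich L1 L g) (sandwich K K1 h)
           * (F1 g * sandwich_coeff D L1 L g) * (F2 h * sandwich_coeff D K K1 h))"
  proof (rule lincomb_cong; clarify)
    fix g h assume gh: "g \<in> G D" "h \<in> G D"
    then have gH: "inH (one D) g" "inH (one D) h" using G_iff_inH[OF D] by blast+
    show "sandwich L1 K1 (m (m g (m x y)) h) = m (sandwich L1 L g) (sandwich K K1 h)"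
      unfolding sandwich_def x_def[symmetric] y_def[symmetric] using S ab GS gh by (simp add: assoc)
    show "be D (m g (m x y)) h * (be D g (m x y) * F1 g * al x y) * F2 h
          * sandwich_coeff D L1 K1 (m (m g (m x y)) h)
        = al (sandwich L1 L g) (sandwich K K1 h)
          * (F1 g * sandwich_coeff D L1 L g) * (F2 h * sandwich_coeff D K K1 h)"
      using sandwich_coeff_product[OF D a x y b pH gH]
      unfolding sandwich_def sandwich_coeff_def x_def[symmetric] y_def[symmetric]
      by (simp only: mult_ac)
  qed
  finally show ?thesis by (rule sym)
qed

text \<open>If the product were \<open>\<J>\<close>-above \<open>1\<^sub>D\<close>, stability would put \<open>u\<^sub>L u\<^sub>K\<^sup>*\<close> into the
  \<open>\<H>\<close>-class of \<open>1\<^sub>D\<close>.\<close>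

lemma sandwich_product_below:
  assumes D: "D \<in> Dclasses S m" and L: "L1 \<in> Lclasses_in S m D" "L \<in> Lclasses_in S m D"
    and K: "K \<in> Lclasses_in S m D" "K1 \<in> Lclasses_in S m D"
    and p: "m (u L) (st (u K)) \<notin> G D" and gh: "g \<in> G D" "h \<in> G D"
  shows "below_D S m (m (sandwich L1 L g) (sandwich K K1 h)) D"
proof -
  define e a x y b where "e = one D" and "a = st (u L1)" and "x = u L" and "y = st (u K)" and "b = u K1"
  note o = one_props[OF D, folded e_def]
  have uu: "inL e a" "inR e x" "inL e y" "inR e b"
    unfolding e_def a_def x_def y_def b_def using u_props[OF D L(1)] u_props[OF D L(2)]
      u_props[OF D K(1)] u_props[OF D K(2)] by auto
  then have S: "a \<in> S" "x \<in> S" "y \<in> S" "b \<in> S" unfolding inL_def inR_def by auto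
  have gS: "g \<in> S" "h \<in> S" using gh G_subset[OF D] by auto
  define z where "z = m (sandwich L1 L g) (sandwich K K1 h)"
  have zS: "z \<in> S" unfolding z_def sandwich_def using S gS
    unfolding a_def[symmetric] x_def[symmetric] y_def[symmetric] b_def[symmetric] by simp
  have "m a e = a" using uu(1) unfolding inL_def by simp
  then have "z = m (m a e) (m g (m x (m (m y h) b)))"
    using S gS unfolding z_def sandwich_def
    unfolding a_def[symmetric] x_def[symmetric] y_def[symmetric] b_def[symmetric] by (simp add: assoc)
  moreover have "m g (m x (m (m y h) b)) \<in> S" using S gS by simp
  ultimately have "Jle S m z e" unfolding Jle_def using S(1) by blast
  moreover have "\<not> Jle S m e z"
  proof
    assume "Jle S m e z"
    moreover have "z = m (m a g) (m (m x y) (m h b))"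
      unfolding z_def sandwich_def a_def[symmetric] x_def[symmetric] y_def[symmetric] b_def[symmetric]
      using S gS by (simp add: assoc)
    ultimately have "\<exists>s\<in>S. \<exists>t\<in>S. e = m s (m (m x y) t)"
      by (rule idempotent_Jle_factor[OF _ o(2,3), where a="m a g" and b="m h b"])
        (use S gS in simp_all)
    then obtain s t where "s \<in> S" "t \<in> S" "e = m s (m (m x y) t)" by blast
    then have "inH e (m x y)" using stable_inH[OF o(2,4) uu(2,3)] by blast
    then show False using p G_iff_inH[OF D] unfolding e_def x_def y_def by blast
  qed
  ultimately show ?thesis using below_DI[OF D o(1) zS] unfolding z_def by blast
qed

lemma transfer_mult:
  assumes D: "D \<in> Dclasses S m" and L: "L1 \<in> Lclasses_in S m D" "L \<in> Lclasses_in S m D"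
    and K: "K \<in> Lclasses_in S m D" "K1 \<in> Lclasses_in S m D"
    and F: "F1 \<in> alg_carrier (G D)" "F2 \<in> alg_carrier (G D)"
  obtains J :: "('s \<times> 's) set" and \<psi> v
  where "finite J" "\<forall>j\<in>J. \<psi> j \<in> S \<and> below_D S m (\<psi> j) D"
    "tw_mult S m al (transfer D L1 L F1) (transfer D K K1 F2)
     = transfer D L1 K1 (tw_mult (G D) m (be D) (tw_mult (G D) m (be D) F1 (twP S m st one al u D L K)) F2)
       + lincomb J \<psi> v"
proof (cases "m (u L) (st (u K)) \<in> G D")
  case True
  have "lincomb {} (\<lambda>_. undefined) (\<lambda>_. 0) = (0 :: 's \<Rightarrow> 'r)"
    unfolding lincomb_def by (rule ext) (simp only: sum.empty zero_fun_apply)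
  then show ?thesis
    using that[of "{}" "\<lambda>_. undefined" "\<lambda>_. 0"] transfer_mult_transfer[OF D L K]
      transfer_product_in_G[OF D L K F True] by simp
next
  case False
  have "transfer D L1 K1 (tw_mult (G D) m (be D) (tw_mult (G D) m (be D) F1 (twP S m st one al u D L K)) F2) = 0"
  proof -
    have P0: "twP S m st one al u D L K = 0" using False unfolding twP_eq by simp
    show ?thesis unfolding P0 tw_mult_zero_left tw_mult_zero_right transfer_def lincomb_def
      by (rule_tac ext) (simp only: zero_fun_apply mult_zero_left if_cancel sum.neutral_const)
  qed
  moreover have "\<forall>j\<in>G D \<times> G D. (\<lambda>(g, h). m (sandwich L1 L g) (sandwich K K1 h)) j \<in> S
      \<and> below_D S m ((\<lambda>(g, h). m (sandwich L1 L g) (sandwich K K1 h)) j) D"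
    using sandwich_product_below[OF D L K False] sandwich_props(1)[OF D L] sandwich_props(1)[OF D K]
    by auto
  ultimately show ?thesis
    using that[of "G D \<times> G D"] transfer_mult_transfer[OF D L K] finite_G[OF D]
    by (simp only: finite_SigmaI add_0_left)
qed

section \<open>Lower ideals and the bilinear forms\<close>

abbreviation big_lower_idx :: "'s set \<Rightarrow> 'l \<Rightarrow> (('s set \<times> 'l) \<times> ('s set \<times> 'm) \<times> ('s set \<times> 'm)) set" where
  "big_lower_idx D lam \<equiv> lower_idx (bigLam S m LamD) (bigle S m leD) (bigM S m MD) (D, lam)"

abbreviation big_lower :: "'s set \<Rightarrow> 'l \<Rightarrow> ('s \<Rightarrow> 'r) set" where
  "big_lower D lam \<equiv> lower_ideal (bigLam S m LamD) (bigle S m leD) (bigM S m MD) (bigC S m st one be CD u) (D, lam)"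

lemma big_lower_eq_span:
  "big_lower D lam = cell_span (big_lower_idx D lam) (\<lambda>(mu, a, w). bigC S m st one be CD u mu a w)"
  by (rule lower_ideal_eq_span)

lemma finite_big_lower_idx: "finite (big_lower_idx D lam)"
proof -
  have fin: "finite (bigM S m MD mu)" if "mu \<in> bigLam S m LamD" for mu
  proof -
    have D': "fst mu \<in> Dclasses S m" "snd mu \<in> LamD (fst mu)" using that unfolding bigLam_def by auto
    have "finite (Lclasses_in S m (fst mu))"
      unfolding Lclasses_in_def using Dclasses_subset[OF D'(1)] finite_carrier finite_subset by blast
    then show ?thesis unfolding bigM_def using cellular_finite[OF cellular_G[OF D'(1)]] D'(2) by simp
  qed
  have "finite (Dclasses S m)" unfolding Dclasses_def using finite_carrier by simp
  then have "finite (bigLam S m LamD)"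
    unfolding bigLam_def using cellular_finite[OF cellular_G] by auto
  moreover have "big_lower_idx D lam \<subseteq> Sigma (bigLam S m LamD) (\<lambda>mu. bigM S m MD mu \<times> bigM S m MD mu)"
    unfolding lower_idx_def by auto
  ultimately show ?thesis using fin by (meson finite_SigmaI finite_cartesian_product finite_subset)
qed

lemma transfer_basis_in_big_lower:
  assumes D': "D' \<in> Dclasses S m" "bigle S m leD (D', l) (D, lam)" "(D', l) \<noteq> (D, lam)"
    and L: "L \<in> Lclasses_in S m D'" and K: "K \<in> Lclasses_in S m D'"
    and l: "l \<in> LamD D'" "s \<in> MD D' l" "t \<in> MD D' l"
  shows "transfer D' L K (CD D' l s t) \<in> big_lower D lam"
proof -
  have "((D', l), (L, s), (K, t)) \<in> big_lower_idx D lam"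
    unfolding lower_idx_def bigLam_def bigM_def using assms by auto
  then have "(\<lambda>(mu, a, w). bigC S m st one be CD u mu a w) ((D', l), (L, s), (K, t)) \<in> big_lower D lam"
    unfolding big_lower_eq_span by (rule cell_span_generator[OF finite_big_lower_idx])
  then show ?thesis by (simp add: bigC_eq_transfer)
qed

lemma transfer_in_big_lower:
  assumes D': "D' \<in> Dclasses S m" and L: "L \<in> Lclasses_in S m D'" and K: "K \<in> Lclasses_in S m D'"
    and F: "F \<in> cell_span I (\<lambda>(l, s, t). CD D' l s t)"
    and I: "\<And>l s t. (l, s, t) \<in> I \<Longrightarrow> bigle S m leD (D', l) (D, lam) \<and> (D', l) \<noteq> (D, lam)
      \<and> l \<in> LamD D' \<and> s \<in> MD D' l \<and> t \<in> MD D' l"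
  shows "transfer D' L K F \<in> big_lower D lam"
proof -
  obtain c where "F = (\<Sum>i\<in>I. smul (c i) ((\<lambda>(l, s, t). CD D' l s t) i))"
    using F unfolding cell_span_def by blast
  then have "transfer D' L K F = (\<Sum>i\<in>I. smul (c i) (transfer D' L K ((\<lambda>(l, s, t). CD D' l s t) i)))"
    by (simp add: transfer_sum)
  also have "\<dots> \<in> big_lower D lam"
    unfolding big_lower_eq_span
    by (rule cell_span_sum[OF finite_big_lower_idx], rule cell_span_smul)
      (use transfer_basis_in_big_lower[OF D' _ _ L K] I in \<open>auto simp: big_lower_eq_span\<close>)
  finally show ?thesis .
qed

lemma transfer_lower_in_big_lower:
  assumes D: "D \<in> Dclasses S m" and L: "L \<in> Lclasses_in S m D" and K: "K \<in> Lclasses_in S m D"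
    and F: "F \<in> lower_ideal (LamD D) (leD D) (MD D) (CD D) lam"
  shows "transfer D L K F \<in> big_lower D lam"
  by (rule transfer_in_big_lower[OF D L K F[unfolded lower_ideal_eq_span]])
    (auto simp: lower_idx_def bigle_def)

text \<open>Write \<open>y\<close> as a transported unit multiple of a group element of its own \<open>\<D>\<close>-class
  and expand in the cellular basis of that class.\<close>

lemma basis_elt_below_in_big_lower:
  assumes D: "D \<in> Dclasses S m" and y: "y \<in> S" "below_D S m y D"
  shows "basis_elt y \<in> big_lower D lam"
proof -
  define D' where "D' = Dclass S m y"
  have D': "D' \<in> Dclasses S m" "y \<in> D'" unfolding D'_def Dclasses_def using y Dclass_self by auto
  have less: "Dless S m D' D" using y unfolding below_D_def D'_def by blast
  obtain L K g where LK: "L \<in> Lclasses_in S m D'" "K \<in> Lclasses_in S m D'"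
    and g: "g \<in> G D'" and yeq: "y = sandwich L K g"
    using sandwich_surjective_on_Dclass[OF D'] by blast
  obtain w where w: "1 = sandwich_coeff D' L K g * w"
    using sandwich_coeff_unit[OF D'(1) LK g] unfolding dvd_def by blast
  define F where "F = lincomb {g} (\<lambda>_. g) (\<lambda>_. w)"
  have "F \<in> alg_carrier (G D')" unfolding F_def alg_carrier_def lincomb_def using g by auto
  then have F: "F \<in> cell_span (cell_idx (LamD D') (MD D')) (\<lambda>(l, s, t). CD D' l s t)"
    using cellular_spans[OF cellular_G[OF D'(1)]] by blast
  have "transfer D' L K F = lincomb {g} (\<lambda>_. sandwich L K g) (\<lambda>_. w * sandwich_coeff D' L K g)"
    unfolding transfer_def F_def by (rule lincomb_compose[OF finite_G[OF D'(1)]]) (use g in auto)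
  also have "\<dots> = basis_elt y"
    unfolding lincomb_def basis_elt_def yeq using w by (rule_tac ext) (auto simp: mult.commute)
  finally have "basis_elt y = transfer D' L K F" ..
  also have "\<dots> \<in> big_lower D lam"
    using less Dless_irrefl[OF D] transfer_in_big_lower[OF D'(1) LK F]
    by (auto simp: cell_idx_def bigle_def)
  finally show ?thesis .
qed

lemma lincomb_below_in_big_lower:
  assumes "D \<in> Dclasses S m" "finite J" "\<forall>j\<in>J. \<psi> j \<in> S \<and> below_D S m (\<psi> j) D"
  shows "lincomb J \<psi> v \<in> big_lower D lam"
  unfolding lincomb_eq_sum big_lower_eq_span
  by (rule cell_span_sum[OF finite_big_lower_idx], rule cell_span_smul)
    (use basis_elt_below_in_big_lower assms in \<open>auto simp: big_lower_eq_span\<close>)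

lemma bigC_apply_sandwich:
  assumes D: "D \<in> Dclasses S m" and L: "L \<in> Lclasses_in S m D" and K: "K \<in> Lclasses_in S m D"
    and g: "g \<in> G D"
    and D': "D' \<in> Dclasses S m" and L': "L' \<in> Lclasses_in S m D'" and K': "K' \<in> Lclasses_in S m D'"
  shows "bigC S m st one be CD u (D', l) (L', s) (K', t) (sandwich L K g)
    = (if D' = D \<and> L' = L \<and> K' = K then CD D l s t g * sandwich_coeff D L K g else 0)"
proof (cases "D' = D \<and> L' = L \<and> K' = K")
  case True
  then show ?thesis using transfer_apply_sandwich[OF D L K g] by (simp add: bigC_eq_transfer)
next
  case False
  note y = sandwich_props[OF D L K g]
  have "transfer D' L' K' (CD D' l s t) (sandwich L K g) = 0"
  proof (rule ccontr)
    assume "transfer D' L' K' (CD D' l s t) (sandwich L K g) \<noteq> 0"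
    then obtain g' where g': "g' \<in> G D'" "sandwich L' K' g' = sandwich L K g"
      using lincomb_nonzero[of "G D'" "sandwich L' K'"] unfolding transfer_def by blast
    note y' = sandwich_props[OF D' L' K' g'(1), unfolded g'(2)]
    have "D' = D" using Dclasses_eq_Dclass[OF D' y'(2)] Dclasses_eq_Dclass[OF D y(2)] by simp
    moreover have "K' = K" "L' = L" using y'(3,4) y(3,4) by simp_all
    ultimately show False using False by blast
  qed
  then show ?thesis unfolding if_not_P[OF False] by (simp add: bigC_eq_transfer)
qed

lemma big_lower_apply_sandwich:
  assumes D: "D \<in> Dclasses S m" and L: "L \<in> Lclasses_in S m D" and K: "K \<in> Lclasses_in S m D"
    and g: "g \<in> G D"
  shows "(\<Sum>i\<in>big_lower_idx D lam. smul (c i) ((\<lambda>(mu, a, w). bigC S m st one be CD u mu a w) i))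
      (sandwich L K g)
    = (\<Sum>(l, s, t)\<in>lower_idx (LamD D) (leD D) (MD D) lam. c ((D, l), (L, s), (K, t)) * CD D l s t g)
      * sandwich_coeff D L K g"
proof -
  let ?I = "lower_idx (LamD D) (leD D) (MD D) lam"
  let ?f = "\<lambda>i. c i * (\<lambda>(mu, a, w). bigC S m st one be CD u mu a w) i (sandwich L K g)"
  define emb :: "'l \<times> 'm \<times> 'm \<Rightarrow> ('s set \<times> 'l) \<times> ('s set \<times> 'm) \<times> ('s set \<times> 'm)"
    where "emb = (\<lambda>(l, s, t). ((D, l), (L, s), (K, t)))"
  have emb: "emb ` ?I \<subseteq> big_lower_idx D lam" "inj_on emb ?I"
    unfolding emb_def lower_idx_def bigLam_def bigle_def bigM_def using D L K by (auto intro: inj_onI)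
  have "(\<Sum>i\<in>big_lower_idx D lam. ?f i) = (\<Sum>i\<in>emb ` ?I. ?f i)"
  proof (rule sum.mono_neutral_right[OF finite_big_lower_idx emb(1)], rule ballI)
    fix i assume i: "i \<in> big_lower_idx D lam - emb ` ?I"
    obtain D' l L' s K' t where i': "i = ((D', l), (L', s), (K', t))" by (cases i) auto
    have m: "D' \<in> Dclasses S m" "L' \<in> Lclasses_in S m D'" "K' \<in> Lclasses_in S m D'"
      "bigle S m leD (D', l) (D, lam)" "(D', l) \<noteq> (D, lam)" "l \<in> LamD D'" "s \<in> MD D' l" "t \<in> MD D' l"
      using i unfolding i' lower_idx_def bigLam_def bigM_def by auto
    have "\<not> (D' = D \<and> L' = L \<and> K' = K)"
    proof
      assume "D' = D \<and> L' = L \<and> K' = K"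
      then have "(l, s, t) \<in> ?I" "i = emb (l, s, t)"
        using m Dless_irrefl[OF D] unfolding i' emb_def lower_idx_def bigle_def by auto
      then show False using i by blast
    qed
    then show "?f i = 0" unfolding i' using bigC_apply_sandwich[OF D L K g m(1-3)] by auto
  qed
  also have "\<dots> = (\<Sum>k\<in>?I. ?f (emb k))" by (rule sum.reindex[OF emb(2), unfolded comp_def])
  also have "\<dots> = (\<Sum>(l, s, t)\<in>?I. c ((D, l), (L, s), (K, t)) * CD D l s t g) * sandwich_coeff D L K g"
    unfolding sum_distrib_right emb_def using bigC_apply_sandwich[OF D L K g D L K]
    by (intro sum.cong refl) (auto simp: mult.assoc)
  finally show ?thesis unfolding sum_fun_apply smul_def .
qed

lemma lincomb_below_vanishes:
  assumes D: "D \<in> Dclasses S m" and y: "y \<in> D" and below: "\<forall>j\<in>J. below_D S m (\<psi> j) D"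
  shows "lincomb J \<psi> v y = 0"
proof (rule ccontr)
  assume "lincomb J \<psi> v y \<noteq> 0"
  then obtain j where "j \<in> J" "\<psi> j = y" using lincomb_nonzero[of J \<psi> v] by blast
  then have "Dless S m (Dclass S m y) D" using below unfolding below_D_def by blast
  moreover have "Dclass S m y = D" using Dclasses_eq_Dclass[OF D y] by (rule sym)
  ultimately show False using Dless_irrefl[OF D] by simp
qed

text \<open>Compare coefficients at the points \<open>u\<^sub>L\<^sup>* g u\<^sub>K\<close> of \<open>D\<close>: there \<open>lincomb J \<psi> v\<close>
  vanishes, \<open>B\<close> only involves the basis elements indexed by \<open>(D, l), L, K\<close>, and the coefficients
  of \<open>transfer D L K\<close> are units.\<close>

lemma lower_ideal_of_transfer:
  assumes D: "D \<in> Dclasses S m" and L: "L \<in> Lclasses_in S m D" and K: "K \<in> Lclasses_in S m D"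
    and X: "X \<in> alg_carrier (G D)" and Y: "Y \<in> alg_carrier (G D)"
    and J: "finite J" and below: "\<forall>j\<in>J. \<psi> j \<in> S \<and> below_D S m (\<psi> j) D"
    and B: "B \<in> big_lower D lam"
    and eq: "transfer D L K X + lincomb J \<psi> v = smul r (transfer D L K Y) + B"
  shows "\<exists>F\<in>lower_ideal (LamD D) (leD D) (MD D) (CD D) lam. X = smul r Y + F"
proof -
  let ?I = "lower_idx (LamD D) (leD D) (MD D) lam"
  obtain c where c: "B = (\<Sum>i\<in>big_lower_idx D lam. smul (c i) ((\<lambda>(mu, a, w). bigC S m st one be CD u mu a w) i))"
    using B unfolding big_lower_eq_span cell_span_def by blast
  define F where "F = (\<Sum>i\<in>?I. smul ((\<lambda>(l, s, t). c ((D, l), (L, s), (K, t))) i) ((\<lambda>(l, s, t). CD D l s t) i))"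
  have F_lower: "F \<in> lower_ideal (LamD D) (leD D) (MD D) (CD D) lam"
    unfolding lower_ideal_eq_span cell_span_def F_def by (intro CollectI exI[of _ "\<lambda>(l, s, t). c ((D, l), (L, s), (K, t))"]) simp
  have "X g = (smul r Y + F) g" for g
  proof (cases "g \<in> G D")
    case False
    have "(\<lambda>(l, s, t). CD D l s t) i g = 0" if "i \<in> ?I" for i
      using that cellular_basis_in_carrier[OF cellular_G[OF D]] False
      unfolding lower_idx_def alg_carrier_def by auto
    then have "F g = 0" unfolding F_def sum_fun_apply smul_def by (intro sum.neutral ballI) simp
    moreover have "X g = 0" "Y g = 0" using X Y False unfolding alg_carrier_def by blast+
    ultimately show ?thesis by (simp add: smul_def)
  next
    case True
    have "lincomb J \<psi> v (sandwich L K g) = 0"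
      by (rule lincomb_below_vanishes[OF D sandwich_props(2)[OF D L K True]]) (use below in blast)
    moreover have "F g = (\<Sum>(l, s, t)\<in>?I. c ((D, l), (L, s), (K, t)) * CD D l s t g)"
      unfolding F_def sum_fun_apply smul_def by (intro sum.cong refl) auto
    ultimately have "X g * sandwich_coeff D L K g = (r * Y g + F g) * sandwich_coeff D L K g"
      using fun_cong[OF eq, of "sandwich L K g"] big_lower_apply_sandwich[OF D L K True, where lam=lam and c=c]
      unfolding c transfer_apply_sandwich[OF D L K True] smul_def plus_fun_apply
      by (simp add: algebra_simps)
    then show ?thesis
      using unit_mult_right_cancel'[OF sandwich_coeff_unit[OF D L K True]] by (simp add: smul_def)
  qed
  then show ?thesis using F_lower by blast
qed


abbreviation small_condition :: "'s set \<Rightarrow> 'l \<Rightarrow> ('s \<Rightarrow> 'r) \<Rightarrow> 'm \<Rightarrow> 'm \<Rightarrow> 'r \<Rightarrow> bool" where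
  "small_condition D lam P s t r \<equiv> \<forall>s'\<in>MD D lam. \<forall>t'\<in>MD D lam.
     \<exists>F\<in>lower_ideal (LamD D) (leD D) (MD D) (CD D) lam.
       tw_mult (G D) m (be D) (tw_mult (G D) m (be D) (CD D lam s' s) P) (CD D lam t t')
         = smul r (CD D lam s' t') + F"

abbreviation big_condition :: "'s set \<Rightarrow> 'l \<Rightarrow> 's set \<times> 'm \<Rightarrow> 's set \<times> 'm \<Rightarrow> 'r \<Rightarrow> bool" where
  "big_condition D lam Ls Kt r \<equiv> \<forall>s'\<in>bigM S m MD (D, lam). \<forall>t'\<in>bigM S m MD (D, lam).
     \<exists>B\<in>big_lower D lam.
       tw_mult S m al (bigC S m st one be CD u (D, lam) s' Ls) (bigC S m st one be CD u (D, lam) Kt t')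
         = smul r (bigC S m st one be CD u (D, lam) s' t') + B"

lemma big_condition_if_small:
  assumes D: "D \<in> Dclasses S m" and lam: "lam \<in> LamD D"
    and L: "L \<in> Lclasses_in S m D" "s \<in> MD D lam" and K: "K \<in> Lclasses_in S m D" "t \<in> MD D lam"
    and small: "small_condition D lam (twP S m st one al u D L K) s t r"
  shows "big_condition D lam (L, s) (K, t) r"
proof (intro ballI)
  fix s' t' assume "s' \<in> bigM S m MD (D, lam)" "t' \<in> bigM S m MD (D, lam)"
  then obtain L1 s1 K1 t1 where s': "s' = (L1, s1)" "L1 \<in> Lclasses_in S m D" "s1 \<in> MD D lam"
    and t': "t' = (K1, t1)" "K1 \<in> Lclasses_in S m D" "t1 \<in> MD D lam"
    unfolding bigM_def by auto
  note carrier = cellular_basis_in_carrier[OF cellular_G[OF D] lam]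
  obtain F where F: "F \<in> lower_ideal (LamD D) (leD D) (MD D) (CD D) lam"
    "tw_mult (G D) m (be D) (tw_mult (G D) m (be D) (CD D lam s1 s) (twP S m st one al u D L K))
       (CD D lam t t1) = smul r (CD D lam s1 t1) + F"
    using small s'(3) t'(3) by blast
  obtain J :: "('s \<times> 's) set" and \<psi> v where J: "finite J" "\<forall>j\<in>J. \<psi> j \<in> S \<and> below_D S m (\<psi> j) D"
    "tw_mult S m al (transfer D L1 L (CD D lam s1 s)) (transfer D K K1 (CD D lam t t1))
     = transfer D L1 K1 (smul r (CD D lam s1 t1) + F) + lincomb J \<psi> v"
    using transfer_mult[OF D s'(2) L(1) K(1) t'(2) carrier[OF s'(3) L(2)] carrier[OF K(2) t'(3)]]
    unfolding F(2) by blast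
  have "transfer D L1 K1 F + lincomb J \<psi> v \<in> big_lower D lam"
    using cell_span_add transfer_lower_in_big_lower[OF D s'(2) t'(2) F(1)]
      lincomb_below_in_big_lower[OF D J(1,2)] unfolding big_lower_eq_span by blast
  moreover have "tw_mult S m al (bigC S m st one be CD u (D, lam) s' (L, s)) (bigC S m st one be CD u (D, lam) (K, t) t')
      = smul r (bigC S m st one be CD u (D, lam) s' t') + (transfer D L1 K1 F + lincomb J \<psi> v)"
    unfolding s'(1) t'(1) bigC_eq_transfer fst_conv snd_conv J(3) transfer_smul_add
    by (simp add: add.assoc)
  ultimately show "\<exists>B\<in>big_lower D lam.
      tw_mult S m al (bigC S m st one be CD u (D, lam) s' (L, s)) (bigC S m st one be CD u (D, lam) (K, t) t')
        = smul r (bigC S m st one be CD u (D, lam) s' t') + B" by blast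
qed

lemma small_condition_if_big:
  assumes D: "D \<in> Dclasses S m" and lam: "lam \<in> LamD D"
    and L: "L \<in> Lclasses_in S m D" "s \<in> MD D lam" and K: "K \<in> Lclasses_in S m D" "t \<in> MD D lam"
    and big: "big_condition D lam (L, s) (K, t) r"
  shows "small_condition D lam (twP S m st one al u D L K) s t r"
proof (intro ballI)
  fix s1 t1 assume s1: "s1 \<in> MD D lam" and t1: "t1 \<in> MD D lam"
  note carrier = cellular_basis_in_carrier[OF cellular_G[OF D] lam]
  have "(L, s1) \<in> bigM S m MD (D, lam)" "(K, t1) \<in> bigM S m MD (D, lam)"
    unfolding bigM_def using L K s1 t1 by auto
  then obtain B where B: "B \<in> big_lower D lam"
    "tw_mult S m al (bigC S m st one be CD u (D, lam) (L, s1) (L, s))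
       (bigC S m st one be CD u (D, lam) (K, t) (K, t1))
      = smul r (bigC S m st one be CD u (D, lam) (L, s1) (K, t1)) + B"
    using big by blast
  obtain J :: "('s \<times> 's) set" and \<psi> v where J: "finite J" "\<forall>j\<in>J. \<psi> j \<in> S \<and> below_D S m (\<psi> j) D"
    "tw_mult S m al (transfer D L L (CD D lam s1 s)) (transfer D K K (CD D lam t t1))
     = transfer D L K (tw_mult (G D) m (be D) (tw_mult (G D) m (be D) (CD D lam s1 s)
         (twP S m st one al u D L K)) (CD D lam t t1)) + lincomb J \<psi> v"
    using transfer_mult[OF D L(1) L(1) K(1) K(1) carrier[OF s1 L(2)] carrier[OF K(2) t1]] by blast
  show "\<exists>F\<in>lower_ideal (LamD D) (leD D) (MD D) (CD D) lam.
      tw_mult (G D) m (be D) (tw_mult (G D) m (be D) (CD D lam s1 s) (twP S m st one al u D L K))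
        (CD D lam t t1) = smul r (CD D lam s1 t1) + F"
  proof (rule lower_ideal_of_transfer[OF D L(1) K(1) _ carrier[OF s1 t1] J(1,2) B(1)])
    show "tw_mult (G D) m (be D) (tw_mult (G D) m (be D) (CD D lam s1 s) (twP S m st one al u D L K))
        (CD D lam t t1) \<in> alg_carrier (G D)"
      by (rule tw_mult_closed[OF G_mult_closed[OF D]])
    show "transfer D L K (tw_mult (G D) m (be D) (tw_mult (G D) m (be D) (CD D lam s1 s)
        (twP S m st one al u D L K)) (CD D lam t t1)) + lincomb J \<psi> v
      = smul r (transfer D L K (CD D lam s1 t1)) + B"
      using B(2)[unfolded bigC_eq_transfer fst_conv snd_conv] unfolding J(3) .
  qed
qed

lemma cell_form_eq_cell_form_a:
  assumes D: "D \<in> Dclasses S m" and lam: "lam \<in> LamD D"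
    and L: "L \<in> Lclasses_in S m D" "s \<in> MD D lam" and K: "K \<in> Lclasses_in S m D" "t \<in> MD D lam"
  shows "cell_form (tw_mult S m al) (bigLam S m LamD) (bigle S m leD) (bigM S m MD)
      (bigC S m st one be CD u) (D, lam) (L, s) (K, t)
    = cell_form_a (tw_mult (G D) m (be D)) (LamD D) (leD D) (MD D) (CD D)
      lam (twP S m st one al u D L K) s t"
proof -
  have "big_condition D lam (L, s) (K, t) r \<longleftrightarrow> small_condition D lam (twP S m st one al u D L K) s t r"
    for r using big_condition_if_small[OF assms] small_condition_if_big[OF assms] by blast
  then show ?thesis unfolding cell_form_def cell_form_a_def by simp
qed

end

theorem lemma13:
  fixes S :: "'s set" and m :: "'s \<Rightarrow> 's \<Rightarrow> 's" and st :: "'s \<Rightarrow> 's"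
    and al :: "'s \<Rightarrow> 's \<Rightarrow> 'r::comm_ring_1"
    and one :: "'s set \<Rightarrow> 's"
    and be :: "'s set \<Rightarrow> 's \<Rightarrow> 's \<Rightarrow> 'r"
    and LamD :: "'s set \<Rightarrow> 'l set" and leD :: "'s set \<Rightarrow> 'l \<Rightarrow> 'l \<Rightarrow> bool"
    and MD :: "'s set \<Rightarrow> 'l \<Rightarrow> 'm set"
    and CD :: "'s set \<Rightarrow> 'l \<Rightarrow> 'm \<Rightarrow> 'm \<Rightarrow> ('s \<Rightarrow> 'r)"
    and u :: "'s set \<Rightarrow> 's"
  assumes finS: "finite S"
    and sg: "semigroup_on S m"
    and inv: "anti_involution_on S m st"
    and tw: "twisting S m al"
    and al_sym: "\<forall>x\<in>S. \<forall>y\<in>S. al x y = al (st y) (st x)"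
    and one_D: "\<forall>D\<in>Dclasses S m. one D \<in> D \<and> m (one D) (one D) = one D \<and> st (one D) = one D"
    and be_unit: "\<forall>D\<in>Dclasses S m. \<forall>x y. inLL S m st one D x y \<longrightarrow> be D x y dvd 1"
    and be_cocycle: "\<forall>D\<in>Dclasses S m. \<forall>x\<in>S. \<forall>y\<in>S. \<forall>z\<in>S.
        inLL S m st one D x y \<and> inLL S m st one D (m x y) z \<and>
        inLL S m st one D x (m y z) \<and> inLL S m st one D y z \<longrightarrow>
        be D x y * be D (m x y) z = be D x (m y z) * be D y z"
    and be_al: "\<forall>D\<in>Dclasses S m. \<forall>x\<in>S. \<forall>y\<in>S. \<forall>z\<in>S.
        inLL S m st one D (m x y) z \<and> inLL S m st one D y z \<longrightarrow>
        al x y * be D (m x y) z = al x (m y z) * be D y z"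
    and be_sym: "\<forall>D\<in>Dclasses S m. \<forall>x\<in>S. \<forall>y\<in>S.
        inLL S m st one D x y \<and> inLL S m st one D (st y) (st x) \<longrightarrow>
        be D x y = be D (st y) (st x)"
    and cell_G: "\<forall>D\<in>Dclasses S m.
        cellular (GD S m st one D) (tw_mult (GD S m st one D) m (be D)) (alg_star st)
                 (LamD D) (leD D) (MD D) (CD D)"
    and u_L: "\<forall>D\<in>Dclasses S m. \<forall>L\<in>Lclasses_in S m D. u L \<in> L \<and> Rrel S m (u L) (one D)"
  shows "\<forall>D\<in>Dclasses S m. \<forall>lam\<in>LamD D.
           \<forall>L\<in>Lclasses_in S m D. \<forall>s\<in>MD D lam. \<forall>K\<in>Lclasses_in S m D. \<forall>t\<in>MD D lam.
      cell_form (tw_mult S m al) (bigLam S m LamD) (bigle S m leD) (bigM S m MD)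
                (bigC S m st one be CD u) (D, lam) (L, s) (K, t)
    = cell_form_a (tw_mult (GD S m st one D) m (be D)) (LamD D) (leD D) (MD D) (CD D)
                lam (twP S m st one al u D L K) s t"
proof -
  interpret twisted_cellular_setting S m st al one be LamD leD MD CD u
    by unfold_locales (fact assms)+
  show ?thesis using cell_form_eq_cell_form_a by blast
qed

end
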